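(* Suppose the setting below holds, all local functions $f_i$ ($i=1,\dots,m$) are convex, the step sizes are $\gamma_k=\frac{2}{k+1}$, and the sample sizes satisfy Sampling Rule 1 for some epoch length $q\in\mathbb{Z}^+$. Let $x^*$ be an optimal solution of $\min_{x\in\Omega}F(x)$. Then $\mathbb{E}[F(\bar x^k)]-F(x^* )=\mathcal{O}(1/k)$.
   Context: Setting. Problem: minimize $F(x)=\frac1m\sum_{i=1}^m f_i(x)$ over $x\in\Omega\subset\mathbb{R}^d$, where $f_i(x)=\frac1{n_i}\sum_{j=1}^{n_i} f_{i,j}(x)$. Assumption 1: $\Omega$ is nonempty, convex and compact with diameter $\bar\rho=\max_{x,\hat x\in\Omega}\|x-\hat x\|$. Standing regularity: each $f_{i,j}$ is differentiable and $L$-smooth on a neighborhood of $\Omega$, each $f_i$ is $G$-Lipschitz on $\Omega$, and $\|\nabla f_i(x)\|\le C$ on $\Omega$. Assumption 2: connected undirected graph on $m$ agents; $W\in\mathbb{R}^{m\times m}$ symmetric, nonnegative, $W_{ij}=0$ unless $i=j$ or $\{i,j\}$ is an edge, doubly stochastic; $\lambda_2(W)$ denotes the largest modulus of eigenvalues of $W$ other than the simple eigenvalue $1$, and $|\lambda_2(W)|<1$. Algorithm DstoFW with step sizes $\gamma_k\in(0,1]$, epoch length $q\in\mathbb{Z}^+$ and sample sizes $|S^k|$: initialize $x_i^1\in\Omega$, $d_i^1=v_i^1=g_i^1=\nabla f_i(x_i^1)$. For $k=1,2,\dots$ each agent $i$: $\overline{x_i^k}=\sum_{j=1}^m W_{ij}x_j^k$;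 $u_i^k\in\arg\min_{u\in\Omega}\langle u,d_i^k\rangle$; $x_i^{k+1}=(1-\gamma_k)\overline{x_i^k}+\gamma_k u_i^k$; if $(k+1)\bmod q=0$ then $v_i^{k+1}=\frac1{n_i}\sum_{j=1}^{n_i}\nabla f_{i,j}(x_i^{k+1})$, else draw a sample set $S^k$ from $[n_i]$ uniformly at random (independently of the past) and set $v_i^{k+1}=\frac1{|S^k|}\sum_{j\in S^k}[\nabla f_{i,j}(x_i^{k+1})-\nabla f_{i,j}(x_i^k)]+v_i^k$; $g_i^{k+1}=d_i^k+v_i^{k+1}-v_i^k$; $d_i^{k+1}=\sum_{j=1}^m W_{ij}g_j^{k+1}$. Notation: $\bar x^k=\frac1m\sum_ix_i^k$; expectations are over the random sampling. Sampling Rule 1: for every $\tilde n\in\mathbb{Z}^+$, $\sqrt{|S^{\tilde nq-1}|}=q$, and for every integer $k$ with $(\tilde n-1)q+1\le k<\tilde nq-1$, $\sqrt{1/|S^k|}\,\gamma_k\le\sqrt{1/|S^{k+1}|}\,\gamma_{k+1}$. *)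

theory Defs
  imports "HOL-Analysis.Analysis" "HOL-Probability.Probability" "HOL-Library.Landau_Symbols"
begin

(* Agents are 0..m-1; the local samples of agent i are 0..n i - 1. *)

definition local_obj :: "(nat \<Rightarrow> nat \<Rightarrow> 'a \<Rightarrow> real) \<Rightarrow> (nat \<Rightarrow> nat) \<Rightarrow> nat \<Rightarrow> 'a \<Rightarrow> real" where
  "local_obj fij n i x = (1 / real (n i)) * (\<Sum>j<n i. fij i j x)"

definition global_obj :: "nat \<Rightarrow> (nat \<Rightarrow> nat \<Rightarrow> 'a \<Rightarrow> real) \<Rightarrow> (nat \<Rightarrow> nat) \<Rightarrow> 'a \<Rightarrow> real" where
  "global_obj m fij n x = (1 / real m) * (\<Sum>i<m. local_obj fij n i x)"

definition local_grad :: "(nat \<Rightarrow> nat \<Rightarrow> 'a \<Rightarrow> 'a::real_vector) \<Rightarrow> (nat \<Rightarrow> nat) \<Rightarrow> nat \<Rightarrow> 'a \<Rightarrow> 'a" where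
  "local_grad gr n i x = (1 / real (n i)) *\<^sub>R (\<Sum>j<n i. gr i j x)"

definition connected_graph :: "nat \<Rightarrow> (nat \<Rightarrow> nat \<Rightarrow> bool) \<Rightarrow> bool" where
  "connected_graph m E \<longleftrightarrow>
     (\<forall>i j. E i j \<longrightarrow> i < m \<and> j < m \<and> i \<noteq> j \<and> E j i) \<and>
     (\<forall>i<m. \<forall>j<m. E\<^sup>*\<^sup>* i j)"

definition mat_eigenpair :: "nat \<Rightarrow> (nat \<Rightarrow> nat \<Rightarrow> real) \<Rightarrow> real \<Rightarrow> (nat \<Rightarrow> real) \<Rightarrow> bool" where
  "mat_eigenpair m W lam v \<longleftrightarrow>
     (\<exists>i<m. v i \<noteq> 0) \<and> (\<forall>i<m. (\<Sum>j<m. W i j * v j) = lam * v i)"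

definition mixing_matrix :: "nat \<Rightarrow> (nat \<Rightarrow> nat \<Rightarrow> bool) \<Rightarrow> (nat \<Rightarrow> nat \<Rightarrow> real) \<Rightarrow> bool" where
  "mixing_matrix m E W \<longleftrightarrow>
     (\<forall>i<m. \<forall>j<m. W i j = W j i) \<and>
     (\<forall>i<m. \<forall>j<m. 0 \<le> W i j) \<and>
     (\<forall>i<m. \<forall>j<m. W i j \<noteq> 0 \<longrightarrow> i = j \<or> E i j) \<and>
     (\<forall>i<m. (\<Sum>j<m. W i j) = 1) \<and>
     (\<forall>j<m. (\<Sum>i<m. W i j) = 1) \<and>
     \<comment> \<open>1 is a simple eigenvalue\<close>
     (\<forall>v. mat_eigenpair m W 1 v \<longrightarrow> (\<exists>c. \<forall>i<m. v i = c)) \<and>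
     \<comment> \<open>all other eigenvalues have modulus < 1, i.e. |lambda_2(W)| < 1\<close>
     (\<forall>lam v. mat_eigenpair m W lam v \<and> lam \<noteq> 1 \<longrightarrow> \<bar>lam\<bar> < 1)"

(* Sampling Rule 1; s k = |S^k| *)
definition sampling_rule1 :: "nat \<Rightarrow> (nat \<Rightarrow> real) \<Rightarrow> (nat \<Rightarrow> nat) \<Rightarrow> bool" where
  "sampling_rule1 q \<gamma> s \<longleftrightarrow>
     (\<forall>N::nat. N \<ge> 1 \<longrightarrow>
        sqrt (real (s (N * q - 1))) = real q \<and>
        (\<forall>k. (N - 1) * q + 1 \<le> k \<and> k < N * q - 1 \<longrightarrow>
           sqrt (1 / real (s k)) * \<gamma> k \<le> sqrt (1 / real (s (Suc k))) * \<gamma> (Suc k)))"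

(* The DstoFW iteration. dstofw ... t is the state (x^k, v^k, d^k) at iteration k = t+1.
   \<omega> (k, i, l), l < s k, is the l-th index of the sample S^k drawn by agent i.
   lmo k i d is the linear-minimization output u_i^k for direction d. *)
primrec dstofw :: "nat \<Rightarrow> (nat \<Rightarrow> nat \<Rightarrow> real) \<Rightarrow> (nat \<Rightarrow> nat) \<Rightarrow> (nat \<Rightarrow> nat \<Rightarrow> 'a \<Rightarrow> 'a)
   \<Rightarrow> (nat \<Rightarrow> nat \<Rightarrow> 'a \<Rightarrow> 'a) \<Rightarrow> (nat \<Rightarrow> real) \<Rightarrow> nat \<Rightarrow> (nat \<Rightarrow> nat)
   \<Rightarrow> (nat \<times> nat \<times> nat \<Rightarrow> nat) \<Rightarrow> (nat \<Rightarrow> 'a::real_inner) \<Rightarrow> nat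
   \<Rightarrow> (nat \<Rightarrow> 'a) \<times> (nat \<Rightarrow> 'a) \<times> (nat \<Rightarrow> 'a)" where
  "dstofw m W n gr lmo \<gamma> q s \<omega> x1 0 =
     (x1, (\<lambda>i. local_grad gr n i (x1 i)), (\<lambda>i. local_grad gr n i (x1 i)))"
| "dstofw m W n gr lmo \<gamma> q s \<omega> x1 (Suc t) =
     (case dstofw m W n gr lmo \<gamma> q s \<omega> x1 t of (x, v, d) \<Rightarrow>
       let k = Suc t;
           xbar = (\<lambda>i. \<Sum>j<m. W i j *\<^sub>R x j);
           u = (\<lambda>i. lmo k i (d i));
           x' = (\<lambda>i. (1 - \<gamma> k) *\<^sub>R xbar i + \<gamma> k *\<^sub>R u i);
           v' = (\<lambda>i. if (k + 1) mod q = 0 then local_grad gr n i (x' i)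
                     else (1 / real (s k)) *\<^sub>R
                            (\<Sum>l<s k. gr i (\<omega> (k, i, l)) (x' i) - gr i (\<omega> (k, i, l)) (x i))
                          + v i);
           g' = (\<lambda>i. d i + v' i - v i);
           d' = (\<lambda>i. \<Sum>j<m. W i j *\<^sub>R g' j)
       in (x', v', d'))"

(* x^k_i for k >= 1 *)
definition dstofw_x :: "nat \<Rightarrow> (nat \<Rightarrow> nat \<Rightarrow> real) \<Rightarrow> (nat \<Rightarrow> nat) \<Rightarrow> (nat \<Rightarrow> nat \<Rightarrow> 'a \<Rightarrow> 'a)
   \<Rightarrow> (nat \<Rightarrow> nat \<Rightarrow> 'a \<Rightarrow> 'a) \<Rightarrow> (nat \<Rightarrow> real) \<Rightarrow> nat \<Rightarrow> (nat \<Rightarrow> nat)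
   \<Rightarrow> (nat \<times> nat \<times> nat \<Rightarrow> nat) \<Rightarrow> (nat \<Rightarrow> 'a::real_inner) \<Rightarrow> nat \<Rightarrow> nat \<Rightarrow> 'a" where
  "dstofw_x m W n gr lmo \<gamma> q s \<omega> x1 k = fst (dstofw m W n gr lmo \<gamma> q s \<omega> x1 (k - 1))"

definition dstofw_xbar :: "nat \<Rightarrow> (nat \<Rightarrow> nat \<Rightarrow> real) \<Rightarrow> (nat \<Rightarrow> nat) \<Rightarrow> (nat \<Rightarrow> nat \<Rightarrow> 'a \<Rightarrow> 'a)
   \<Rightarrow> (nat \<Rightarrow> nat \<Rightarrow> 'a \<Rightarrow> 'a) \<Rightarrow> (nat \<Rightarrow> real) \<Rightarrow> nat \<Rightarrow> (nat \<Rightarrow> nat)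
   \<Rightarrow> (nat \<times> nat \<times> nat \<Rightarrow> nat) \<Rightarrow> (nat \<Rightarrow> 'a::real_inner) \<Rightarrow> nat \<Rightarrow> 'a" where
  "dstofw_xbar m W n gr lmo \<gamma> q s \<omega> x1 k =
     (1 / real m) *\<^sub>R (\<Sum>i<m. dstofw_x m W n gr lmo \<gamma> q s \<omega> x1 k i)"

(* Joint law of all samples S^t (t < K) of all agents: every index is drawn
   independently and uniformly from [n_i] (sampling with replacement). *)
definition sample_pmf :: "nat \<Rightarrow> (nat \<Rightarrow> nat) \<Rightarrow> (nat \<Rightarrow> nat) \<Rightarrow> nat \<Rightarrow> (nat \<times> nat \<times> nat \<Rightarrow> nat) pmf" where
  "sample_pmf m n s K =
     Pi_pmf {(t, i, l). t < K \<and> i < m \<and> l < s t} 0 (\<lambda>(t, i, l). pmf_of_set {..<n i})"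

end

(*
  With step sizes 2/(k+1) and Lipschitz gradients, consecutive iterates move by O(1/k), and the
  whole argument runs deterministically along every sample path.  The mixing matrix contracts
  disagreement between agents by a factor kappa < 1 (the second largest eigenvalue modulus), so
  perturbations of size O(1/k) per step keep the consensus errors of the iterates and of the
  tracked gradients at O(1/k).  The variance-reduced estimator is exact after each full-gradient
  recomputation and drifts by at most 2 L |x_(k+1) - x_k| per step in between, so it is
  O(q^2/k) off.  Hence every local direction d_i is within O(1/k) of the gradient of F at the
  average iterate, and the Frank-Wolfe recursion  h_(k+1) <= (1 - gamma_k) h_k + O(1/k^2)  for
  the optimality gap gives h_k = O(1/k) surely, hence in expectation.
*)
theory Submission
  imports Defs
begin

lemma mixing_matrixD:
  assumes "mixing_matrix m E W"
  shows "\<forall>i<m. \<forall>j<m. W i j = W j i" and "\<forall>i<m. \<forall>j<m. 0 \<le> W i j"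
    and "\<forall>i<m. (\<Sum>j<m. W i j) = 1" and "\<forall>j<m. (\<Sum>i<m. W i j) = 1"
    and "\<forall>v. mat_eigenpair m W 1 v \<longrightarrow> (\<exists>c. \<forall>i<m. v i = c)"
    and "\<forall>lam v. mat_eigenpair m W lam v \<and> lam \<noteq> 1 \<longrightarrow> \<bar>lam\<bar> < 1"
  using assms unfolding mixing_matrix_def by auto

lemma sum_sq_sub_sum_sq_mix:
  fixes W :: "nat \<Rightarrow> nat \<Rightarrow> real" and z :: "nat \<Rightarrow> real"
  assumes rows: "\<forall>i<m. (\<Sum>j<m. W i j) = 1" and cols: "\<forall>j<m. (\<Sum>i<m. W i j) = 1"
  shows "(\<Sum>i<m. (z i)\<^sup>2) - (\<Sum>i<m. (\<Sum>j<m. W i j * z j)\<^sup>2)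
         = (\<Sum>i<m. \<Sum>j<m. W i j * (z j - (\<Sum>k<m. W i k * z k))\<^sup>2)"
proof -
  define y where "y i = (\<Sum>k<m. W i k * z k)" for i
  have row: "(\<Sum>j<m. W i j * (z j - y i)\<^sup>2) = (\<Sum>j<m. W i j * (z j)\<^sup>2) - (y i)\<^sup>2"
    if "i < m" for i
  proof -
    have "(\<Sum>j<m. W i j * (z j - y i)\<^sup>2)
        = (\<Sum>j<m. W i j * (z j)\<^sup>2 - 2 * y i * (W i j * z j) + (y i)\<^sup>2 * W i j)"
      by (intro sum.cong) (simp_all add: power2_eq_square algebra_simps)
    also have "\<dots> = (\<Sum>j<m. W i j * (z j)\<^sup>2) - 2 * y i * y i + (y i)\<^sup>2 * (\<Sum>j<m. W i j)"
      by (simp add: sum.distrib sum_subtractf sum_distrib_left y_def)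
    finally show ?thesis
      using rows that by (simp add: power2_eq_square)
  qed
  have "(\<Sum>i<m. \<Sum>j<m. W i j * (z j)\<^sup>2) = (\<Sum>j<m. (\<Sum>i<m. W i j) * (z j)\<^sup>2)"
    by (subst sum.swap) (simp add: sum_distrib_right)
  also have "\<dots> = (\<Sum>j<m. (z j)\<^sup>2)"
    using cols by simp
  finally show ?thesis
    using row by (simp add: sum_subtractf y_def)
qed

text \<open>If mixing does not decrease the sum of squares, every row of \<open>W\<close> averages entries of \<open>z\<close>
  that all equal the row's mean; by symmetry, mixing the mixed vector once more gives back \<open>z\<close>.\<close>
lemma mix_mix_eq_if_sum_sq_le:
  fixes W :: "nat \<Rightarrow> nat \<Rightarrow> real" and z :: "nat \<Rightarrow> real"
  assumes sym: "\<forall>i<m. \<forall>j<m. W i j = W j i" and nonneg: "\<forall>i<m. \<forall>j<m. 0 \<le> W i j"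
    and rows: "\<forall>i<m. (\<Sum>j<m. W i j) = 1" and cols: "\<forall>j<m. (\<Sum>i<m. W i j) = 1"
    and le: "(\<Sum>i<m. (z i)\<^sup>2) \<le> (\<Sum>i<m. (\<Sum>j<m. W i j * z j)\<^sup>2)"
    and j: "j < m"
  shows "(\<Sum>i<m. W j i * (\<Sum>k<m. W i k * z k)) = z j"
proof -
  define y where "y i = (\<Sum>k<m. W i k * z k)" for i
  have term_nonneg: "0 \<le> W i j * (z j - y i)\<^sup>2" if "i < m" "j < m" for i j
    using nonneg that by simp
  have "(\<Sum>i<m. \<Sum>j<m. W i j * (z j - y i)\<^sup>2) \<le> 0"
    using sum_sq_sub_sum_sq_mix[OF rows cols, of z] le unfolding y_def by linarith
  moreover have "0 \<le> (\<Sum>i<m. \<Sum>j<m. W i j * (z j - y i)\<^sup>2)"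
    using term_nonneg by (intro sum_nonneg) auto
  ultimately have "(\<Sum>i<m. \<Sum>j<m. W i j * (z j - y i)\<^sup>2) = 0"
    by linarith
  then have "\<forall>i\<in>{..<m}. (\<Sum>j<m. W i j * (z j - y i)\<^sup>2) = 0"
    by (subst (asm) sum_nonneg_eq_0_iff) (auto intro!: sum_nonneg term_nonneg)
  then have "W i j * (z j - y i)\<^sup>2 = 0" if "i < m" "j < m" for i j
    using that sum_nonneg_eq_0_iff[of "{..<m}" "\<lambda>j. W i j * (z j - y i)\<^sup>2"] term_nonneg
    by auto
  then have Wz: "W i j * z j = W i j * y i" if "i < m" "j < m" for i j
    using that by (auto simp: power2_eq_square)
  have "(\<Sum>i<m. W j i * y i) = (\<Sum>i<m. W i j * z j)"
    by (intro sum.cong refl) (metis Wz j lessThan_iff sym)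
  also have "\<dots> = z j"
    using cols j by (simp add: sum_distrib_right[symmetric])
  finally show ?thesis
    unfolding y_def .
qed

text \<open>Otherwise \<open>z - W z\<close> would be an eigenvector for the eigenvalue \<open>-1\<close>, or \<open>z\<close> a nonconstant
  fixed point of \<open>W\<close>.\<close>
lemma mixing_matrix_sum_sq_less:
  fixes W :: "nat \<Rightarrow> nat \<Rightarrow> real" and z :: "nat \<Rightarrow> real"
  assumes W: "mixing_matrix m E W"
    and sum0: "(\<Sum>i<m. z i) = 0" and nz: "\<exists>i<m. z i \<noteq> 0"
  shows "(\<Sum>i<m. (\<Sum>j<m. W i j * z j)\<^sup>2) < (\<Sum>i<m. (z i)\<^sup>2)"
proof (rule ccontr)
  note Wp = mixing_matrixD[OF W]
  define y where "y i = (\<Sum>k<m. W i k * z k)" for i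
  assume "\<not> ?thesis"
  then have Wy: "(\<Sum>i<m. W j i * y i) = z j" if "j < m" for j
    unfolding y_def by (intro mix_mix_eq_if_sum_sq_le[OF Wp(1-4)] that) simp
  have "z i = y i" if i: "i < m" for i
  proof (rule ccontr)
    assume "z i \<noteq> y i"
    have "(\<Sum>j<m. W k j * (z j - y j)) = - 1 * (z k - y k)" if "k < m" for k
      using Wy[OF that] by (simp add: right_diff_distrib sum_subtractf y_def)
    then have "mat_eigenpair m W (-1) (\<lambda>i. z i - y i)"
      unfolding mat_eigenpair_def using i \<open>z i \<noteq> y i\<close> by auto
    then show False
      using Wp(6) by force
  qed
  then have "mat_eigenpair m W 1 z"
    using nz unfolding mat_eigenpair_def y_def by auto
  then obtain c where c: "\<forall>i<m. z i = c"
    using Wp(5) by blast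
  then have "real m * c = 0"
    using sum0 by simp
  then show False
    using nz c by auto
qed

definition zero_mean_sphere :: "nat \<Rightarrow> (nat \<Rightarrow> real) set" where
  "zero_mean_sphere m = {z \<in> extensional {..<m}. (\<Sum>i<m. z i) = 0 \<and> (\<Sum>i<m. (z i)\<^sup>2) = 1}"

lemma compactin_zero_mean_sphere:
  "compactin (product_topology (\<lambda>_. euclideanreal) {..<m}) (zero_mean_sphere m)"
  (is "compactin ?X ?S")
proof -
  have proj: "continuous_map ?X euclideanreal (\<lambda>z. z i)" if "i < m" for i
    using that by (intro continuous_map_product_projection) auto
  have sum: "continuous_map ?X euclideanreal (\<lambda>z. \<Sum>i<m. z i)"
    by (intro continuous_map_sum proj) auto
  have sum_sq: "continuous_map ?X euclideanreal (\<lambda>z. \<Sum>i<m. (z i)\<^sup>2)"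
    by (intro continuous_map_sum continuous_map_real_pow proj) auto
  have "closedin ?X ({z \<in> topspace ?X. (\<Sum>i<m. z i) \<in> {0}} \<inter>
      {z \<in> topspace ?X. (\<Sum>i<m. (z i)\<^sup>2) \<in> {1}})"
    by (intro closedin_Int closedin_continuous_map_preimage[OF sum]
        closedin_continuous_map_preimage[OF sum_sq]) (auto simp: closed_closedin[symmetric])
  also have "(\<dots>) = ?S"
    unfolding topspace_product_topology_alt zero_mean_sphere_def by auto
  finally have closed: "closedin ?X ?S" .
  have "?S \<subseteq> PiE {..<m} (\<lambda>_. {-1..1})"
  proof
    fix z assume "z \<in> ?S"
    then have z: "z \<in> extensional {..<m}" "(\<Sum>i<m. (z i)\<^sup>2) = 1"
      unfolding zero_mean_sphere_def by auto
    have "z i \<in> {-1..1}" if "i < m" for i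
    proof -
      have "(z i)\<^sup>2 \<le> (\<Sum>i<m. (z i)\<^sup>2)"
        by (rule member_le_sum) (use that in auto)
      then show ?thesis
        using z by (simp add: abs_square_le_1 abs_le_iff)
    qed
    with z(1) show "z \<in> PiE {..<m} (\<lambda>_. {-1..1})"
      by (simp add: PiE_iff)
  qed
  moreover have "compactin ?X (PiE {..<m} (\<lambda>_. {-1..1::real}))"
    by (subst compactin_PiE) auto
  ultimately show ?thesis
    using closed_compactin closed by blast
qed

lemma zero_mean_sphere_rescale:
  fixes z :: "nat \<Rightarrow> real"
  assumes z0: "(\<Sum>i<m. z i) = 0" and nz: "\<exists>i<m. z i \<noteq> 0"
  obtains z' where "z' \<in> zero_mean_sphere m"
    "(\<Sum>i<m. (\<Sum>j<m. W i j * z j)\<^sup>2) = (\<Sum>i<m. (z i)\<^sup>2) * (\<Sum>i<m. (\<Sum>j<m. W i j * z' j)\<^sup>2)"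
proof -
  define r where "r = sqrt (\<Sum>i<m. (z i)\<^sup>2)"
  obtain i0 where i0: "i0 < m" "z i0 \<noteq> 0"
    using nz by auto
  have "0 < (z i0)\<^sup>2"
    using i0 by simp
  also have "\<dots> \<le> (\<Sum>i<m. (z i)\<^sup>2)"
    by (rule member_le_sum) (use i0 in auto)
  finally have r2: "r\<^sup>2 = (\<Sum>i<m. (z i)\<^sup>2)" and "r > 0"
    unfolding r_def by simp_all
  define z' where "z' = restrict (\<lambda>i. z i / r) {..<m}"
  have "(\<Sum>i<m. z' i) = (\<Sum>i<m. z i) / r"
    unfolding z'_def by (simp add: sum_divide_distrib)
  moreover have "(\<Sum>i<m. (z' i)\<^sup>2) = (\<Sum>i<m. (z i)\<^sup>2) / r\<^sup>2"
    unfolding z'_def by (simp add: sum_divide_distrib power_divide)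
  ultimately have "z' \<in> zero_mean_sphere m"
    using z0 r2 \<open>r > 0\<close> unfolding zero_mean_sphere_def z'_def by auto
  moreover have "(\<Sum>i<m. (\<Sum>j<m. W i j * z' j)\<^sup>2) = (\<Sum>i<m. (\<Sum>j<m. W i j * z j)\<^sup>2) / r\<^sup>2"
    unfolding z'_def by (simp add: sum_divide_distrib[symmetric] power_divide)
  ultimately show ?thesis
    using r2 \<open>r > 0\<close> by (intro that) auto
qed

text \<open>The quadratic form is maximized on the compact set \<open>zero_mean_sphere m\<close>, where it is
  \<open>< 1\<close> pointwise; its maximum is the contraction factor.\<close>
lemma mixing_matrix_contraction_real:
  fixes W :: "nat \<Rightarrow> nat \<Rightarrow> real"
  assumes W: "mixing_matrix m E W"
  obtains \<mu> where "0 \<le> \<mu>" "\<mu> < 1"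
    "\<And>z. (\<Sum>i<m. z i) = 0 \<Longrightarrow> (\<Sum>i<m. (\<Sum>j<m. W i j * z j)\<^sup>2) \<le> \<mu> * (\<Sum>i<m. (z i)\<^sup>2)"
proof -
  define Q where "Q z = (\<Sum>i<m. (\<Sum>j<m. W i j * z j)\<^sup>2)" for z :: "nat \<Rightarrow> real"
  have "continuous_map (product_topology (\<lambda>_. euclideanreal) {..<m}) euclideanreal Q"
    unfolding Q_def
    by (intro continuous_map_sum continuous_map_real_pow continuous_map_real_mult
        continuous_map_canonical_const continuous_map_product_projection finite_lessThan) auto
  from image_compactin[OF compactin_zero_mean_sphere this]
  have compact: "compact (Q ` zero_mean_sphere m)"
    by simp
  have zero: "Q z = 0" if "\<not> (\<exists>i<m. z i \<noteq> 0)" for z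
    using that unfolding Q_def by simp
  show ?thesis
  proof (cases "zero_mean_sphere m = {}")
    case True
    have "Q z \<le> 0 * (\<Sum>i<m. (z i)\<^sup>2)" if z0: "(\<Sum>i<m. z i) = 0" for z
    proof (cases "\<exists>i<m. z i \<noteq> 0")
      case nonzero: True
      show ?thesis
        using zero_mean_sphere_rescale[OF z0 nonzero] True by blast
    qed (simp add: zero)
    then show ?thesis
      by (intro that[of 0]) (simp_all add: Q_def)
  next
    case False
    then obtain z1 where z1: "z1 \<in> zero_mean_sphere m" and max: "\<forall>z\<in>zero_mean_sphere m. Q z \<le> Q z1"
      using compact_attains_sup[OF compact] by auto
    have z1S: "(\<Sum>i<m. z1 i) = 0" "(\<Sum>i<m. (z1 i)\<^sup>2) = 1"
      using z1 unfolding zero_mean_sphere_def by auto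
    have "\<exists>i<m. z1 i \<noteq> 0"
    proof (rule ccontr)
      assume "\<not> (\<exists>i<m. z1 i \<noteq> 0)"
      then show False
        using z1S(2) by simp
    qed
    then have "Q z1 < 1"
      using mixing_matrix_sum_sq_less[OF W z1S(1)] z1S(2) unfolding Q_def by simp
    show ?thesis
    proof (rule that[of "max 0 (Q z1)"], unfold Q_def[symmetric])
      show "Q z \<le> max 0 (Q z1) * (\<Sum>i<m. (z i)\<^sup>2)" if z0: "(\<Sum>i<m. z i) = 0" for z
      proof (cases "\<exists>i<m. z i \<noteq> 0")
        case True
        then obtain z' where "z' \<in> zero_mean_sphere m" "Q z = (\<Sum>i<m. (z i)\<^sup>2) * Q z'"
          using zero_mean_sphere_rescale[OF z0] unfolding Q_def by blast
        then have "Q z \<le> (\<Sum>i<m. (z i)\<^sup>2) * Q z1"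
          using max by (simp add: mult_left_mono sum_nonneg)
        also have "\<dots> \<le> max 0 (Q z1) * (\<Sum>i<m. (z i)\<^sup>2)"
          by (simp add: mult.commute mult_right_mono sum_nonneg)
        finally show ?thesis .
      qed (simp add: zero sum_nonneg)
    qed (use \<open>Q z1 < 1\<close> in auto)
  qed
qed

text \<open>A family \<open>z :: nat \<Rightarrow> 'a\<close> stands for the stacked vector \<open>(z\<^sub>0, \<dots>, z\<^sub>m\<^sub>-\<^sub>1)\<close> of the
  agents' local variables; \<open>agent_norm\<close> is its Frobenius norm.\<close>
definition agent_norm :: "nat \<Rightarrow> (nat \<Rightarrow> 'a::real_normed_vector) \<Rightarrow> real" where
  "agent_norm m z = L2_set (\<lambda>i. norm (z i)) {..<m}"

definition agent_mix :: "nat \<Rightarrow> (nat \<Rightarrow> nat \<Rightarrow> real) \<Rightarrow> (nat \<Rightarrow> 'a::real_vector) \<Rightarrow> nat \<Rightarrow> 'a" where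
  "agent_mix m W z = (\<lambda>i. \<Sum>j<m. W i j *\<^sub>R z j)"

definition agent_avg :: "nat \<Rightarrow> (nat \<Rightarrow> 'a::real_vector) \<Rightarrow> 'a" where
  "agent_avg m z = (1 / real m) *\<^sub>R (\<Sum>i<m. z i)"

definition agent_dev :: "nat \<Rightarrow> (nat \<Rightarrow> 'a::real_vector) \<Rightarrow> nat \<Rightarrow> 'a" where
  "agent_dev m z = (\<lambda>i. z i - agent_avg m z)"

lemma agent_norm_nonneg: "0 \<le> agent_norm m z"
  by (simp add: agent_norm_def)

lemma agent_norm_cong: "(\<And>i. i < m \<Longrightarrow> z i = w i) \<Longrightarrow> agent_norm m z = agent_norm m w"
  unfolding agent_norm_def by (intro L2_set_cong) auto

lemma agent_norm_triangle: "agent_norm m (\<lambda>i. z i + w i) \<le> agent_norm m z + agent_norm m w"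
proof -
  have "agent_norm m (\<lambda>i. z i + w i) \<le> L2_set (\<lambda>i. norm (z i) + norm (w i)) {..<m}"
    unfolding agent_norm_def by (rule L2_set_mono) (auto simp: norm_triangle_ineq)
  also have "\<dots> \<le> agent_norm m z + agent_norm m w"
    unfolding agent_norm_def by (rule L2_set_triangle_ineq)
  finally show ?thesis .
qed

lemma agent_norm_scaleR: "agent_norm m (\<lambda>i. c *\<^sub>R z i) = \<bar>c\<bar> * agent_norm m z"
  unfolding agent_norm_def by (simp add: L2_set_right_distrib)

lemma norm_le_agent_norm: "i < m \<Longrightarrow> norm (z i) \<le> agent_norm m z"
  unfolding agent_norm_def by (rule member_le_L2_set) auto

lemma agent_norm_le_sqrt:
  assumes "\<And>i. i < m \<Longrightarrow> norm (z i) \<le> B" and "0 \<le> B"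
  shows "agent_norm m z \<le> sqrt (real m) * B"
proof -
  have "agent_norm m z \<le> L2_set (\<lambda>i. B) {..<m}"
    unfolding agent_norm_def by (rule L2_set_mono) (use assms in auto)
  then show ?thesis
    using assms(2) by (simp add: L2_set_constant)
qed

lemma norm_diff_triangle3:
  fixes a b c d :: "'a::real_normed_vector"
  shows "norm (a - d) \<le> norm (a - b) + norm (b - c) + norm (c - d)"
  using norm_triangle_ineq[of "a - b" "b - c"] norm_triangle_ineq[of "a - c" "c - d"] by simp

lemma norm_sample_avg_le:
  assumes "\<And>l. l < N \<Longrightarrow> norm (a l) \<le> B" and "0 \<le> B"
  shows "norm ((1 / real N) *\<^sub>R (\<Sum>l<N. a l)) \<le> B"
proof (cases "N = 0")
  case False
  have "norm (\<Sum>l<N. a l) \<le> (\<Sum>l<N. B)"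
    using assms(1) by (intro order_trans[OF norm_sum sum_mono]) auto
  then show ?thesis
    using False by (simp add: field_simps)
qed (use assms in simp)

lemma agent_avg_add: "agent_avg m (\<lambda>i. f i + g i) = agent_avg m f + agent_avg m g"
  unfolding agent_avg_def by (simp add: sum.distrib scaleR_add_right)

lemma agent_avg_diff: "agent_avg m (\<lambda>i. f i - g i) = agent_avg m f - agent_avg m g"
  unfolding agent_avg_def by (simp add: sum_subtractf scaleR_diff_right)

lemma agent_avg_scaleR: "agent_avg m (\<lambda>i. c *\<^sub>R f i) = c *\<^sub>R agent_avg m f"
  unfolding agent_avg_def by (simp add: scaleR_sum_right[symmetric])

lemma agent_avg_const: "m \<ge> 1 \<Longrightarrow> agent_avg m (\<lambda>i. c) = c"
  unfolding agent_avg_def by (simp add: sum_constant_scaleR)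

lemma agent_dev_add: "agent_dev m (\<lambda>i. f i + g i) i = agent_dev m f i + agent_dev m g i"
  unfolding agent_dev_def agent_avg_add by simp

lemma agent_dev_scaleR: "agent_dev m (\<lambda>i. c *\<^sub>R f i) i = c *\<^sub>R agent_dev m f i"
  unfolding agent_dev_def agent_avg_scaleR by (simp add: scaleR_diff_right)

lemma sum_agent_dev: "m \<ge> 1 \<Longrightarrow> (\<Sum>i<m. agent_dev m z i) = 0"
  unfolding agent_dev_def agent_avg_def by (simp add: sum_subtractf sum_constant_scaleR)

lemma norm_agent_avg_le:
  assumes "m \<ge> 1" and "\<And>i. i < m \<Longrightarrow> norm (z i) \<le> B"
  shows "norm (agent_avg m z) \<le> B"
proof -
  have "norm (\<Sum>i<m. z i) \<le> (\<Sum>i<m. B)"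
    using assms(2) by (intro order_trans[OF norm_sum sum_mono]) auto
  then show ?thesis
    using assms(1) unfolding agent_avg_def by (simp add: field_simps)
qed

lemma inner_agent_avg_le:
  assumes "m \<ge> 1" and "\<And>i. i < m \<Longrightarrow> z i \<bullet> a \<le> B"
  shows "agent_avg m z \<bullet> a \<le> B"
proof -
  have "(\<Sum>i<m. z i \<bullet> a) \<le> (\<Sum>i<m. B)"
    using assms(2) by (intro sum_mono) auto
  then show ?thesis
    using assms(1) unfolding agent_avg_def by (simp add: inner_sum_left field_simps)
qed

text \<open>Centering reduces the sum of squares: \<open>\<Sum> |z\<^sub>i - a|\<^sup>2 = \<Sum> |z\<^sub>i|\<^sup>2 - m |a|\<^sup>2\<close>
  for the mean \<open>a\<close>.\<close>
lemma agent_norm_dev_le: "agent_norm m (agent_dev m z) \<le> agent_norm m (z :: nat \<Rightarrow> 'a::real_inner)"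
proof -
  define a where "a = agent_avg m z"
  have sum_z: "(\<Sum>i<m. z i) = real m *\<^sub>R a"
    by (cases "m = 0") (simp_all add: a_def agent_avg_def)
  have "(\<Sum>i<m. (norm (z i - a))\<^sup>2)
      = (\<Sum>i<m. (norm (z i))\<^sup>2) - 2 * ((\<Sum>i<m. z i) \<bullet> a) + real m * (norm a)\<^sup>2"
    by (simp add: power2_norm_eq_inner inner_diff_left inner_diff_right sum_subtractf sum.distrib
        inner_sum_left inner_sum_right inner_commute sum_distrib_left)
  also have "\<dots> = (\<Sum>i<m. (norm (z i))\<^sup>2) - real m * (norm a)\<^sup>2"
    unfolding sum_z by (simp add: power2_norm_eq_inner)
  finally have "(\<Sum>i<m. (norm (z i - a))\<^sup>2) \<le> (\<Sum>i<m. (norm (z i))\<^sup>2)"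
    by simp
  then show ?thesis
    unfolding agent_norm_def L2_set_def agent_dev_def a_def by simp
qed

lemma sum_agent_mix:
  assumes cols: "\<forall>j<m. (\<Sum>i<m. W i j) = 1"
  shows "(\<Sum>i<m. agent_mix m W z i) = (\<Sum>j<m. z j)"
proof -
  have "(\<Sum>i<m. agent_mix m W z i) = (\<Sum>j<m. (\<Sum>i<m. W i j) *\<^sub>R z j)"
    unfolding agent_mix_def by (subst sum.swap) (simp add: scaleR_sum_left)
  then show ?thesis
    using cols by simp
qed

lemma agent_avg_mix: "\<forall>j<m. (\<Sum>i<m. W i j) = 1 \<Longrightarrow> agent_avg m (agent_mix m W z) = agent_avg m z"
  unfolding agent_avg_def by (simp add: sum_agent_mix)

lemma agent_mix_dev:
  assumes rows: "\<forall>i<m. (\<Sum>j<m. W i j) = 1" and cols: "\<forall>j<m. (\<Sum>i<m. W i j) = 1"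
    and "i < m"
  shows "agent_mix m W (agent_dev m z) i = agent_dev m (agent_mix m W z) i"
proof -
  have "(\<Sum>j<m. W i j *\<^sub>R agent_avg m z) = agent_avg m z"
    using rows \<open>i < m\<close> by (simp add: scaleR_sum_left[symmetric])
  then show ?thesis
    unfolding agent_mix_def agent_dev_def agent_avg_mix[OF cols, unfolded agent_mix_def]
    by (simp add: scaleR_diff_right sum_subtractf)
qed

lemma agent_mix_in_convex:
  assumes "convex S" and "\<forall>i<m. \<forall>j<m. 0 \<le> W i j" and "\<forall>i<m. (\<Sum>j<m. W i j) = 1"
    and "\<forall>j<m. z j \<in> S" and "i < m"
  shows "agent_mix m W z i \<in> S"
  unfolding agent_mix_def by (rule convex_sum) (use assms in auto)

lemma agent_avg_in_convex:
  assumes "convex S" and "m \<ge> 1" and "\<forall>j<m. z j \<in> S"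
  shows "agent_avg m z \<in> S"
proof -
  have "(\<Sum>j<m. (1 / real m) *\<^sub>R z j) \<in> S"
    by (rule convex_sum) (use assms in auto)
  then show ?thesis
    unfolding agent_avg_def by (simp add: scaleR_sum_right)
qed

text \<open>The scalar contraction applies coordinatewise in an orthonormal basis.\<close>
lemma mixing_matrix_contraction:
  assumes W: "mixing_matrix m E W"
  obtains \<kappa> where "0 \<le> \<kappa>" "\<kappa> < 1"
    "\<And>z :: nat \<Rightarrow> 'a::euclidean_space. (\<Sum>i<m. z i) = 0 \<Longrightarrow>
       agent_norm m (agent_mix m W z) \<le> \<kappa> * agent_norm m z"
proof -
  obtain \<mu> where \<mu>: "0 \<le> \<mu>" "\<mu> < 1" and contract:
    "\<And>z. (\<Sum>i<m. z i) = 0 \<Longrightarrow> (\<Sum>i<m. (\<Sum>j<m. W i j * z j)\<^sup>2) \<le> \<mu> * (\<Sum>i<m. (z i)\<^sup>2)"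
    using mixing_matrix_contraction_real[OF W] by blast
  have norm_sq: "(norm x)\<^sup>2 = (\<Sum>b\<in>Basis. (x \<bullet> b)\<^sup>2)" for x :: 'a
    unfolding power2_norm_eq_inner by (subst euclidean_inner) (simp add: power2_eq_square)
  show ?thesis
  proof (rule that[of "sqrt \<mu>"])
    fix z :: "nat \<Rightarrow> 'a" assume z0: "(\<Sum>i<m. z i) = 0"
    have coord: "(\<Sum>i<m. (\<Sum>j<m. W i j * (z j \<bullet> b))\<^sup>2) \<le> \<mu> * (\<Sum>i<m. (z i \<bullet> b)\<^sup>2)" for b
      using z0 by (intro contract) (simp add: inner_sum_left[symmetric])
    have "(\<Sum>i<m. (norm (agent_mix m W z i))\<^sup>2)
        = (\<Sum>b\<in>Basis. \<Sum>i<m. (\<Sum>j<m. W i j * (z j \<bullet> b))\<^sup>2)"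
      unfolding agent_mix_def norm_sq by (simp add: inner_sum_left) (rule sum.swap)
    also have "\<dots> \<le> (\<Sum>b\<in>Basis. \<mu> * (\<Sum>i<m. (z i \<bullet> b)\<^sup>2))"
      by (intro sum_mono coord)
    also have "\<dots> = \<mu> * (\<Sum>i<m. (norm (z i))\<^sup>2)"
      unfolding norm_sq sum_distrib_left[symmetric] by (subst sum.swap) simp
    finally show "agent_norm m (agent_mix m W z) \<le> sqrt \<mu> * agent_norm m z"
      unfolding agent_norm_def L2_set_def by (simp add: real_sqrt_mult[symmetric])
  qed (use \<mu> in auto)
qed

lemma linear_recurrence_le_max:
  fixes f :: "nat \<Rightarrow> real"
  assumes a: "0 \<le> a" "a < 1" and "0 \<le> b"
    and base: "f t0 \<le> B"
    and step: "\<And>t. t \<ge> t0 \<Longrightarrow> f (Suc t) \<le> a * f t + b"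
    and "t \<ge> t0"
  shows "f t \<le> max B (b / (1 - a))"
  using \<open>t \<ge> t0\<close>
proof (induction t rule: dec_induct)
  case base
  then show ?case
    using assms by simp
next
  case (step t)
  define M where "M = max B (b / (1 - a))"
  have "b / (1 - a) \<le> M"
    unfolding M_def by simp
  then have "b \<le> (1 - a) * M"
    using a by (simp add: field_simps)
  have "f (Suc t) \<le> a * f t + b"
    using assms(5) step by blast
  also have "\<dots> \<le> a * M + b"
    using step a by (simp add: M_def mult_left_mono)
  also have "\<dots> \<le> M"
    using \<open>b \<le> (1 - a) * M\<close> by (simp add: algebra_simps)
  finally show ?case
    unfolding M_def .
qed

text \<open>Multiplying \<open>e (t + 1) \<le> \<kappa> e t + c / (t + 1)\<close> by \<open>t + 2\<close> gives a recurrence of the same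
  kind for \<open>(t + 1) e t\<close>, contracting with factor \<open>(1 + \<kappa>) / 2\<close> once \<open>t \<ge> 3 / (1 - \<kappa>)\<close>.\<close>
lemma contracting_recurrence_weighted_step:
  fixes \<kappa> c :: real and e :: "nat \<Rightarrow> real"
  assumes \<kappa>: "0 \<le> \<kappa>" "\<kappa> < 1" and c: "0 \<le> c" and e: "0 \<le> e t"
    and step: "e (Suc t) \<le> \<kappa> * e t + c / (real t + 1)"
    and t: "3 / (1 - \<kappa>) \<le> real t"
  shows "(real (Suc t) + 1) * e (Suc t) \<le> (1 + \<kappa>) / 2 * ((real t + 1) * e t) + 2 * c"
proof -
  have "3 \<le> real t - \<kappa> * real t"
    using \<kappa> t by (simp add: divide_le_eq algebra_simps)
  then have "\<kappa> * real t + \<kappa> * 3 \<le> 1 + real t"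
    using \<kappa>(2) by linarith
  then have weight: "\<kappa> * (real t + 2) \<le> (1 + \<kappa>) / 2 * (real t + 1)"
    by (simp add: field_simps)
  have "(real (Suc t) + 1) * e (Suc t) \<le> (real t + 2) * (\<kappa> * e t + c / (real t + 1))"
    using step by (simp add: add.commute mult_left_mono)
  also have "\<dots> = (\<kappa> * (real t + 2)) * e t + c * ((real t + 2) / (real t + 1))"
    by (simp add: algebra_simps)
  also have "\<dots> \<le> ((1 + \<kappa>) / 2 * (real t + 1)) * e t + c * 2"
    using weight e c by (intro add_mono mult_right_mono mult_left_mono) (auto simp: divide_le_eq)
  finally show ?thesis
    by (simp add: algebra_simps add_divide_distrib)
qed

lemma contracting_recurrence_inverse_rate:
  fixes \<kappa> c c0 :: real
  assumes \<kappa>: "0 \<le> \<kappa>" "\<kappa> < 1" and c: "0 \<le> c"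
  obtains K where "\<And>e t. (\<forall>t. 0 \<le> e t) \<Longrightarrow> e 0 \<le> c0 \<Longrightarrow>
     (\<forall>t. e (Suc t) \<le> \<kappa> * e t + c / (real t + 1)) \<Longrightarrow> e t \<le> K / (real t + 1)"
proof -
  define M where "M = max c0 (c / (1 - \<kappa>))"
  define t0 where "t0 = nat \<lceil>3 / (1 - \<kappa>)\<rceil>"
  define a where "a = (1 + \<kappa>) / 2"
  define K where "K = max ((real t0 + 1) * M) (2 * c / (1 - a))"
  have a: "0 \<le> a" "a < 1"
    using \<kappa> unfolding a_def by auto
  show ?thesis
  proof (rule that[of K])
    fix e :: "nat \<Rightarrow> real" and t :: nat
    assume e0: "\<forall>t. 0 \<le> e t" and ec0: "e 0 \<le> c0"
      and rec: "\<forall>t. e (Suc t) \<le> \<kappa> * e t + c / (real t + 1)"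
    have "e (Suc t) \<le> \<kappa> * e t + c" for t
    proof -
      have "c / (real t + 1) \<le> c / 1"
        using c by (intro divide_left_mono) auto
      then show ?thesis
        using rec[rule_format, of t] by simp
    qed
    then have bounded: "e t \<le> M" for t
      unfolding M_def by (rule linear_recurrence_le_max[of \<kappa> c e 0, OF \<kappa> c ec0]) auto
    define f where "f t = (real t + 1) * e t" for t
    have f_step: "f (Suc t) \<le> a * f t + 2 * c" if "t \<ge> t0" for t
    proof -
      have "3 / (1 - \<kappa>) \<le> real t"
        using that unfolding t0_def by linarith
      then show ?thesis
        unfolding f_def a_def using e0 rec by (intro contracting_recurrence_weighted_step[OF \<kappa> c]) auto
    qed
    have "f t0 \<le> (real t0 + 1) * M"
      unfolding f_def by (rule mult_left_mono[OF bounded]) simp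
    then have f_bounded: "f t \<le> K" if "t \<ge> t0" for t
      unfolding K_def using c by (intro linear_recurrence_le_max[of a "2 * c" f t0, OF a _ _ f_step that]) auto
    have "(real t + 1) * e t \<le> K"
    proof (cases "t \<ge> t0")
      case False
      have "(real t + 1) * e t \<le> (real t0 + 1) * M"
        using False bounded e0 by (intro mult_mono) auto
      then show ?thesis
        unfolding K_def by simp
    qed (use f_bounded f_def in auto)
    then show "e t \<le> K / (real t + 1)"
      by (simp add: field_simps)
  qed
qed

text \<open>The last index \<open>\<le> t\<close> at which the estimator is recomputed from full gradients.\<close>
definition epoch_start :: "nat \<Rightarrow> nat \<Rightarrow> nat" where
  "epoch_start q t = (if t + 1 < q then 0 else q * ((t + 1) div q) - 1)"

lemma epoch_start_le: "epoch_start q t \<le> t"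
  unfolding epoch_start_def by (simp add: le_diff_conv)

lemma epoch_start_gt:
  assumes q: "q \<ge> 1"
  shows "t < epoch_start q t + q"
proof (cases "t + 1 < q")
  case False
  then have "(t + 1) div q \<ge> 1"
    using q by (simp add: div_greater_zero_iff Suc_le_eq)
  then have "q * ((t + 1) div q) \<ge> 1"
    using q by simp
  moreover have "t + 1 = q * ((t + 1) div q) + (t + 1) mod q" and "(t + 1) mod q < q"
    using q by simp_all
  ultimately show ?thesis
    unfolding epoch_start_def using False by (simp only: if_False)
qed (simp add: epoch_start_def)

lemma epoch_start_reset:
  assumes "q \<ge> 1" and "(Suc t + 1) mod q = 0"
  shows "epoch_start q (Suc t) = Suc t"
proof -
  have "q dvd Suc t + 1"
    using assms by (simp add: mod_eq_0_iff_dvd)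
  then show ?thesis
    unfolding epoch_start_def using dvd_imp_le[of q "Suc t + 1"] by auto
qed

lemma epoch_start_Suc:
  assumes "(Suc t + 1) mod q \<noteq> 0"
  shows "epoch_start q (Suc t) = epoch_start q t"
proof -
  have "Suc (Suc t) div q = Suc t div q"
    using assms by (subst div_Suc) simp
  moreover have "Suc t + 1 \<noteq> q"
    using assms by auto
  ultimately show ?thesis
    unfolding epoch_start_def by auto
qed

lemma epoch_start_ratio:
  assumes q: "q \<ge> 1"
  shows "real t + 1 \<le> real q * (real (epoch_start q t) + 1)"
proof -
  define j where "j = epoch_start q t"
  have "1 * j \<le> q * j"
    using q by (intro mult_le_mono1)
  moreover have "t < j + q"
    unfolding j_def by (rule epoch_start_gt[OF q])
  ultimately have "t + 1 \<le> q * j + q"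
    by linarith
  then have "t + 1 \<le> q * (j + 1)"
    by (simp add: algebra_simps)
  then have "real (t + 1) \<le> real (q * (j + 1))"
    by (simp only: of_nat_le_iff)
  then show ?thesis
    unfolding j_def by (simp add: algebra_simps)
qed

lemma reset_recurrence_since_epoch_start:
  fixes e :: "nat \<Rightarrow> real"
  assumes q: "q \<ge> 1" and c: "0 \<le> c" and e0: "e 0 = 0"
    and reset: "\<And>t. (Suc t + 1) mod q = 0 \<Longrightarrow> e (Suc t) = 0"
    and step: "\<And>t. (Suc t + 1) mod q \<noteq> 0 \<Longrightarrow> e (Suc t) \<le> e t + c / (real t + 1)"
  shows "e t \<le> c * (real t - real (epoch_start q t)) / (real (epoch_start q t) + 1)"
proof (induction t)
  case 0
  then show ?case
    using e0 by (simp add: epoch_start_def)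
next
  case (Suc t)
  show ?case
  proof (cases "(Suc t + 1) mod q = 0")
    case True
    then show ?thesis
      using reset epoch_start_reset[OF q] by simp
  next
    case False
    define j where "j = epoch_start q t"
    have "e (Suc t) \<le> c * (real t - real j) / (real j + 1) + c / (real t + 1)"
      using step[OF False] Suc unfolding j_def by linarith
    also have "c / (real t + 1) \<le> c / (real j + 1)"
      using epoch_start_le[of q t] c unfolding j_def by (intro divide_left_mono) auto
    finally show ?thesis
      using epoch_start_Suc[OF False] unfolding j_def by (simp add: add_divide_distrib[symmetric] algebra_simps)
  qed
qed

lemma reset_recurrence_inverse_rate:
  fixes e :: "nat \<Rightarrow> real"
  assumes q: "q \<ge> 1" and c: "0 \<le> c" and e0: "e 0 = 0"
    and reset: "\<And>t. (Suc t + 1) mod q = 0 \<Longrightarrow> e (Suc t) = 0"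
    and step: "\<And>t. (Suc t + 1) mod q \<noteq> 0 \<Longrightarrow> e (Suc t) \<le> e t + c / (real t + 1)"
  shows "e t \<le> c * real q * real q / (real t + 1)"
proof -
  define j where "j = epoch_start q t"
  have "c * real q * (real t + 1) \<le> c * real q * (real q * (real j + 1))"
    unfolding j_def using c by (intro mult_left_mono epoch_start_ratio[OF q]) auto
  then have "c * real q / (real j + 1) \<le> c * real q * real q / (real t + 1)"
    by (simp add: field_simps)
  moreover have "c * (real t - real j) / (real j + 1) \<le> c * real q / (real j + 1)"
    using epoch_start_le[of q t] epoch_start_gt[OF q, of t] c unfolding j_def
    by (intro divide_right_mono mult_left_mono) auto
  ultimately show ?thesis
    using reset_recurrence_since_epoch_start[OF assms, of t] unfolding j_def by linarith
qed

lemma frank_wolfe_recurrence_inverse_rate: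
  fixes h :: "nat \<Rightarrow> real"
  assumes c: "0 \<le> c" and h0: "h 0 \<le> h\<^sub>0"
    and step: "\<And>t. h (Suc t) \<le> (1 - 2 / (real (Suc t) + 1)) * h t + c / (real t + 1)\<^sup>2"
  shows "h t \<le> max h\<^sub>0 (2 * c) / (real t + 1)"
proof (induction t)
  case 0
  then show ?case
    using h0 by simp
next
  case (Suc t)
  define K where "K = max h\<^sub>0 (2 * c)"
  define x where "x = real t"
  have x: "0 \<le> x"
    unfolding x_def by simp
  have "c * (x + 2) \<le> 2 * c * (x + 1)"
    using c x by (simp add: algebra_simps)
  also have "\<dots> \<le> K * (x + 1)"
    unfolding K_def using x by (intro mult_right_mono) auto
  finally have "c * (x + 2) / ((x + 1)\<^sup>2 * (x + 2)) \<le> K * (x + 1) / ((x + 1)\<^sup>2 * (x + 2))"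
    using x by (intro divide_right_mono) auto
  then have "c / (x + 1)\<^sup>2 \<le> K / ((x + 1) * (x + 2))"
    using x by (simp add: power2_eq_square)
  moreover have "h (Suc t) \<le> x / (x + 2) * (K / (x + 1)) + c / (x + 1)\<^sup>2"
  proof -
    have "1 - 2 / (real (Suc t) + 1) = x / (x + 2)"
      unfolding x_def by (simp add: field_simps)
    then have "h (Suc t) \<le> x / (x + 2) * h t + c / (x + 1)\<^sup>2"
      using step[of t] unfolding x_def by simp
    moreover have "x / (x + 2) * h t \<le> x / (x + 2) * (K / (x + 1))"
      using Suc x unfolding K_def x_def by (intro mult_left_mono) auto
    ultimately show ?thesis
      by linarith
  qed
  moreover have "x / (x + 2) * (K / (x + 1)) + K / ((x + 1) * (x + 2))
      = K * (x + 1) / ((x + 1) * (x + 2))"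
    by (simp add: mult.commute add_divide_distrib algebra_simps)
  moreover have "K * (x + 1) / ((x + 1) * (x + 2)) = K / (x + 2)"
    using x by simp
  ultimately show ?case
    unfolding K_def x_def by (simp add: add.commute)
qed

lemma lipschitz_gradient_linearization:
  fixes f :: "'a::real_inner \<Rightarrow> real"
  assumes S: "convex S" and x: "x \<in> S" and y: "y \<in> S" and L: "0 \<le> L"
    and deriv: "\<And>z. z \<in> S \<Longrightarrow> (f has_derivative (\<lambda>h. g z \<bullet> h)) (at z within S)"
    and lip: "\<And>z w. z \<in> S \<Longrightarrow> w \<in> S \<Longrightarrow> norm (g z - g w) \<le> L * norm (z - w)"
  shows "\<bar>f y - f x - g x \<bullet> (y - x)\<bar> \<le> L * (norm (y - x))\<^sup>2"
proof -
  define p where "p \<tau> = x + \<tau> *\<^sub>R (y - x)" for \<tau> :: real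
  have p_in: "p \<tau> \<in> S" if "\<tau> \<in> {0..1}" for \<tau>
  proof -
    have "(1 - \<tau>) *\<^sub>R x + \<tau> *\<^sub>R y \<in> S"
      using S x y that by (simp add: convex_alt)
    then show ?thesis
      by (simp add: p_def algebra_simps)
  qed
  have dfp: "((\<lambda>\<tau>. f (p \<tau>)) has_derivative (\<lambda>h. g (p \<tau>) \<bullet> (h *\<^sub>R (y - x)))) (at \<tau> within {0..1})"
    if "0 \<le> \<tau>" "\<tau> \<le> 1" for \<tau>
  proof (rule has_derivative_in_compose[where f = p and g = f])
    show "(p has_derivative (\<lambda>h. h *\<^sub>R (y - x))) (at \<tau> within {0..1})"
      unfolding p_def by (auto intro!: derivative_eq_intros)
    show "(f has_derivative (\<lambda>h. g (p \<tau>) \<bullet> h)) (at (p \<tau>) within p ` {0..1})"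
      using p_in that by (intro has_derivative_subset[OF deriv[OF p_in]]) auto
  qed
  obtain \<xi> where \<xi>: "\<xi> \<in> {0<..<1}" and mvt: "f (p 1) - f (p 0) = g (p \<xi>) \<bullet> (1 *\<^sub>R (y - x))"
    using mvt_simple[of 0 1 "\<lambda>\<tau>. f (p \<tau>)" "\<lambda>\<tau> h. g (p \<tau>) \<bullet> (h *\<^sub>R (y - x))"] dfp by auto
  have "f y - f x - g x \<bullet> (y - x) = (g (p \<xi>) - g x) \<bullet> (y - x)"
    using mvt by (simp add: p_def inner_diff_left)
  then have "\<bar>f y - f x - g x \<bullet> (y - x)\<bar> \<le> norm (g (p \<xi>) - g x) * norm (y - x)"
    using Cauchy_Schwarz_ineq2 by simp
  also have "\<dots> \<le> L * norm (p \<xi> - x) * norm (y - x)"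
    using lip[OF p_in x] \<xi> by (intro mult_right_mono) auto
  also have "\<dots> \<le> L * norm (y - x) * norm (y - x)"
    using \<xi> L by (intro mult_right_mono mult_left_mono) (auto simp: p_def mult_left_le_one_le)
  finally show ?thesis
    by (simp add: power2_eq_square mult.assoc)
qed

text \<open>Compare \<open>f\<close> on the segment from \<open>x\<close> to \<open>y\<close> with its chord and let the segment shrink.\<close>
lemma convex_on_above_linearization:
  fixes f :: "'a::real_inner \<Rightarrow> real"
  assumes f: "convex_on S f" and S: "convex S" and x: "x \<in> S" and y: "y \<in> S" and L: "0 \<le> L"
    and lower: "\<And>z. z \<in> S \<Longrightarrow> f x + g \<bullet> (z - x) - L * (norm (z - x))\<^sup>2 \<le> f z"
  shows "g \<bullet> (y - x) \<le> f y - f x"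
proof (rule field_le_epsilon)
  fix e :: real assume e: "0 < e"
  define N where "N = (norm (y - x))\<^sup>2"
  define \<tau> where "\<tau> = min 1 (e / (L * N + 1))"
  have LN: "0 \<le> L * N"
    using L by (simp add: N_def)
  have \<tau>: "0 < \<tau>" "\<tau> \<le> 1" "\<tau> * (L * N) \<le> e"
  proof -
    show "0 < \<tau>" "\<tau> \<le> 1"
      using e LN by (auto simp: \<tau>_def)
    have "\<tau> \<le> e / (L * N + 1)"
      by (simp add: \<tau>_def)
    then have "\<tau> * (L * N + 1) \<le> e"
      using LN by (simp add: field_simps)
    moreover have "\<tau> * (L * N) \<le> \<tau> * (L * N + 1)"
      using \<open>0 < \<tau>\<close> by simp
    ultimately show "\<tau> * (L * N) \<le> e"
      by linarith
  qed
  define z where "z = (1 - \<tau>) *\<^sub>R x + \<tau> *\<^sub>R y"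
  have "z - x = \<tau> *\<^sub>R (y - x)"
    by (simp add: z_def algebra_simps)
  moreover have "z \<in> S"
    using S x y \<tau> by (simp add: z_def convex_alt)
  ultimately have "f x + \<tau> * (g \<bullet> (y - x)) - L * (\<tau>\<^sup>2 * N) \<le> f z"
    using lower[of z] \<tau> by (simp add: N_def power_mult_distrib)
  moreover have "f z \<le> (1 - \<tau>) * f x + \<tau> * f y"
    unfolding z_def using \<tau> by (intro convex_onD[OF f] x y) auto
  ultimately have "\<tau> * (g \<bullet> (y - x)) \<le> \<tau> * (f y - f x + \<tau> * (L * N))"
    by (simp add: algebra_simps power2_eq_square)
  then have "g \<bullet> (y - x) \<le> f y - f x + \<tau> * (L * N)"
    using \<tau> by simp
  then show "g \<bullet> (y - x) \<le> f y - f x + e"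
    using \<tau> by linarith
qed

lemma abs_expectation_diff_le:
  fixes f :: "'b \<Rightarrow> real"
  assumes "finite (set_pmf p)" and "\<And>\<omega>. \<omega> \<in> set_pmf p \<Longrightarrow> \<bar>f \<omega> - c\<bar> \<le> B"
  shows "\<bar>measure_pmf.expectation p f - c\<bar> \<le> B"
proof -
  have int: "integrable (measure_pmf p) f"
    by (rule integrable_measure_pmf_finite[OF assms(1)])
  have upper: "f \<omega> \<le> c + B" and lower: "c - B \<le> f \<omega>" if "\<omega> \<in> set_pmf p" for \<omega>
    using assms(2)[OF that] by linarith+
  have "measure_pmf.expectation p f \<le> c + B"
    using upper by (intro measure_pmf.integral_le_const[OF int]) (simp add: AE_measure_pmf_iff)
  moreover have "c - B \<le> measure_pmf.expectation p f"
    using lower by (intro measure_pmf.integral_ge_const[OF int]) (simp add: AE_measure_pmf_iff)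
  ultimately show ?thesis
    by linarith
qed

lemma set_pmf_of_set_lessThan: "0 < (N :: nat) \<Longrightarrow> set_pmf (pmf_of_set {..<N}) = {..<N}"
  by (intro set_pmf_of_set) auto

lemma sample_pmf_support:
  assumes "\<omega> \<in> set_pmf (sample_pmf m n s k)" and "t < k" "i < m" "l < s t" and "n i \<ge> 1"
  shows "\<omega> (t, i, l) < n i"
proof -
  have fin: "finite {(t, i, l). t < k \<and> i < m \<and> l < s t}"
    by (rule finite_subset[of _ "Sigma {..<k} (\<lambda>t. {..<m} \<times> {..<s t})"]) auto
  have "\<omega> (t, i, l) \<in> set_pmf (pmf_of_set {..<n i})"
    using assms(1-4) unfolding sample_pmf_def set_Pi_pmf[OF fin] PiE_dflt_def by auto
  then show ?thesis
    using assms(5) by (simp add: set_pmf_of_set_lessThan)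
qed

lemma finite_set_sample_pmf:
  assumes "\<forall>i<m. n i \<ge> 1"
  shows "finite (set_pmf (sample_pmf m n s k))"
proof -
  have fin: "finite {(t, i, l). t < k \<and> i < m \<and> l < s t}"
    by (rule finite_subset[of _ "Sigma {..<k} (\<lambda>t. {..<m} \<times> {..<s t})"]) auto
  show ?thesis
    unfolding sample_pmf_def set_Pi_pmf[OF fin]
    using assms by (intro finite_PiE_dflt[OF fin]) (auto simp: Suc_le_eq set_pmf_of_set_lessThan)
qed

definition step_size :: "nat \<Rightarrow> real" where
  "step_size t = 2 / (real (Suc t) + 1)"

lemma step_size_bounds: "0 \<le> step_size t" "step_size t \<le> 1" "step_size t \<le> 2 / (real t + 1)"
  unfolding step_size_def by (auto simp: field_simps)

locale dstofw_setting =
  fixes \<Omega> U :: "'a::euclidean_space set"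
    and m :: nat and n :: "nat \<Rightarrow> nat"
    and fij :: "nat \<Rightarrow> nat \<Rightarrow> 'a \<Rightarrow> real" and gr :: "nat \<Rightarrow> nat \<Rightarrow> 'a \<Rightarrow> 'a"
    and L :: real
    and E :: "nat \<Rightarrow> nat \<Rightarrow> bool" and W :: "nat \<Rightarrow> nat \<Rightarrow> real"
    and q :: nat and s :: "nat \<Rightarrow> nat"
    and lmo :: "nat \<Rightarrow> nat \<Rightarrow> 'a \<Rightarrow> 'a" and x1 :: "nat \<Rightarrow> 'a" and xstar :: 'a
  assumes convex_\<Omega>: "convex \<Omega>" and compact_\<Omega>: "compact \<Omega>"
    and m_pos: "m \<ge> 1" and n_pos: "\<forall>i<m. n i \<ge> 1"
    and \<Omega>_subset_U: "\<Omega> \<subseteq> U"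
    and diff: "\<forall>i<m. \<forall>j<n i. \<forall>x\<in>U. (fij i j has_derivative (\<lambda>h. gr i j x \<bullet> h)) (at x)"
    and smooth: "\<forall>i<m. \<forall>j<n i. \<forall>x\<in>U. \<forall>y\<in>U. norm (gr i j x - gr i j y) \<le> L * norm (x - y)"
    and cvx: "\<forall>i<m. convex_on \<Omega> (local_obj fij n i)"
    and W: "mixing_matrix m E W"
    and q_pos: "q \<ge> 1"
    and lmo: "\<forall>k i d. lmo k i d \<in> \<Omega> \<and> (\<forall>u\<in>\<Omega>. lmo k i d \<bullet> d \<le> u \<bullet> d)"
    and init: "\<forall>i<m. x1 i \<in> \<Omega>"
    and opt: "xstar \<in> \<Omega>" "\<forall>x\<in>\<Omega>. global_obj m fij n xstar \<le> global_obj m fij n x"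
begin

text \<open>\<open>X \<omega> t\<close>, \<open>V \<omega> t\<close>, \<open>D \<omega> t\<close> are the iterates \<open>x\<^sup>k\<close>, \<open>v\<^sup>k\<close>, \<open>d\<^sup>k\<close> of the paper for \<open>k = t + 1\<close>, and
  \<open>lmo_out \<omega> t\<close> is \<open>u\<^sup>k\<close>; accordingly \<open>step_size t = \<gamma>\<^sub>k\<close>.\<close>
definition X where "X \<omega> t = fst (dstofw m W n gr lmo (\<lambda>k. 2 / (real k + 1)) q s \<omega> x1 t)"
definition V where "V \<omega> t = fst (snd (dstofw m W n gr lmo (\<lambda>k. 2 / (real k + 1)) q s \<omega> x1 t))"
definition D where "D \<omega> t = snd (snd (dstofw m W n gr lmo (\<lambda>k. 2 / (real k + 1)) q s \<omega> x1 t))"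
definition lmo_out where "lmo_out \<omega> t i = lmo (Suc t) i (D \<omega> t i)"
definition xbar where "xbar \<omega> t = agent_avg m (X \<omega> t)"

abbreviation grad where "grad i \<equiv> local_grad gr n i"
abbreviation F where "F \<equiv> global_obj m fij n"
definition gradF where "gradF x = agent_avg m (\<lambda>i. grad i x)"

definition admissible :: "(nat \<times> nat \<times> nat \<Rightarrow> nat) \<Rightarrow> bool" where
  "admissible \<omega> \<longleftrightarrow> (\<forall>t i l. i < m \<longrightarrow> \<omega> (t, i, l) < n i)"

lemma W_stochastic:
  "\<forall>i<m. \<forall>j<m. 0 \<le> W i j" "\<forall>i<m. (\<Sum>j<m. W i j) = 1" "\<forall>j<m. (\<Sum>i<m. W i j) = 1"
  using mixing_matrixD[OF W] by auto

lemma state_0: "X \<omega> 0 = x1" "V \<omega> 0 = (\<lambda>i. grad i (x1 i))" "D \<omega> 0 = (\<lambda>i. grad i (x1 i))"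
  unfolding X_def V_def D_def by simp_all

lemma state_Suc:
  "X \<omega> (Suc t) = (\<lambda>i. (1 - step_size t) *\<^sub>R agent_mix m W (X \<omega> t) i + step_size t *\<^sub>R lmo_out \<omega> t i)"
  "V \<omega> (Suc t) = (\<lambda>i. if (Suc t + 1) mod q = 0 then grad i (X \<omega> (Suc t) i)
      else (1 / real (s (Suc t))) *\<^sub>R
        (\<Sum>l<s (Suc t). gr i (\<omega> (Suc t, i, l)) (X \<omega> (Suc t) i) - gr i (\<omega> (Suc t, i, l)) (X \<omega> t i))
        + V \<omega> t i)"
  "D \<omega> (Suc t) = agent_mix m W (\<lambda>i. D \<omega> t i + V \<omega> (Suc t) i - V \<omega> t i)"
proof -
  obtain x v d where xvd: "dstofw m W n gr lmo (\<lambda>k. 2 / (real k + 1)) q s \<omega> x1 t = (x, v, d)"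
    by (metis prod.exhaust)
  define x' where "x' = (\<lambda>i. (1 - step_size t) *\<^sub>R agent_mix m W x i + step_size t *\<^sub>R lmo (Suc t) i (d i))"
  define v' where "v' = (\<lambda>i. if (Suc t + 1) mod q = 0 then grad i (x' i)
      else (1 / real (s (Suc t))) *\<^sub>R
        (\<Sum>l<s (Suc t). gr i (\<omega> (Suc t, i, l)) (x' i) - gr i (\<omega> (Suc t, i, l)) (x i)) + v i)"
  have step: "dstofw m W n gr lmo (\<lambda>k. 2 / (real k + 1)) q s \<omega> x1 (Suc t)
      = (x', v', agent_mix m W (\<lambda>i. d i + v' i - v i))"
    unfolding x'_def v'_def step_size_def agent_mix_def dstofw.simps(2) xvd by (simp add: Let_def)
  have "X \<omega> t = x" "V \<omega> t = v" "D \<omega> t = d"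
    unfolding X_def V_def D_def xvd by simp_all
  then show
    "X \<omega> (Suc t) = (\<lambda>i. (1 - step_size t) *\<^sub>R agent_mix m W (X \<omega> t) i + step_size t *\<^sub>R lmo_out \<omega> t i)"
    "V \<omega> (Suc t) = (\<lambda>i. if (Suc t + 1) mod q = 0 then grad i (X \<omega> (Suc t) i)
      else (1 / real (s (Suc t))) *\<^sub>R
        (\<Sum>l<s (Suc t). gr i (\<omega> (Suc t, i, l)) (X \<omega> (Suc t) i) - gr i (\<omega> (Suc t, i, l)) (X \<omega> t i))
        + V \<omega> t i)"
    "D \<omega> (Suc t) = agent_mix m W (\<lambda>i. D \<omega> t i + V \<omega> (Suc t) i - V \<omega> t i)"
    unfolding X_def V_def D_def lmo_out_def step by (simp_all add: x'_def v'_def cong: if_cong)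
qed

lemma dist_le_diameter: "x \<in> \<Omega> \<Longrightarrow> y \<in> \<Omega> \<Longrightarrow> norm (x - y) \<le> diameter \<Omega>"
  using diameter_bounded_bound[OF compact_imp_bounded[OF compact_\<Omega>]] by (simp add: dist_norm)

lemma diameter_nonneg: "0 \<le> diameter \<Omega>"
  by (rule diameter_ge_0[OF compact_imp_bounded[OF compact_\<Omega>]])

lemma lmo_out_in: "lmo_out \<omega> t i \<in> \<Omega>"
  unfolding lmo_out_def using lmo by blast

lemma X_in: "i < m \<Longrightarrow> X \<omega> t i \<in> \<Omega>"
proof (induction t arbitrary: i)
  case 0
  then show ?case
    using init by (simp add: state_0)
next
  case (Suc t)
  have "agent_mix m W (X \<omega> t) i \<in> \<Omega>"
    using Suc W_stochastic by (intro agent_mix_in_convex[OF convex_\<Omega>]) auto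
  then show ?case
    unfolding state_Suc(1) using lmo_out_in step_size_bounds convex_\<Omega> by (simp add: convex_alt)
qed

lemma X_in_U: "i < m \<Longrightarrow> X \<omega> t i \<in> U"
  using X_in \<Omega>_subset_U by blast

lemma xbar_in: "xbar \<omega> t \<in> \<Omega>"
  unfolding xbar_def using X_in by (intro agent_avg_in_convex[OF convex_\<Omega> m_pos]) auto

lemma xbar_Suc:
  "xbar \<omega> (Suc t) = (1 - step_size t) *\<^sub>R xbar \<omega> t + step_size t *\<^sub>R agent_avg m (lmo_out \<omega> t)"
  unfolding xbar_def state_Suc(1) agent_avg_add agent_avg_scaleR agent_avg_mix[OF W_stochastic(3)] ..

definition contraction_factor where
  "contraction_factor = (SOME \<kappa>. 0 \<le> \<kappa> \<and> \<kappa> < 1 \<and> (\<forall>z :: nat \<Rightarrow> 'a. (\<Sum>i<m. z i) = 0 \<longrightarrow>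
     agent_norm m (agent_mix m W z) \<le> \<kappa> * agent_norm m z))"

lemma contraction_factor: "0 \<le> contraction_factor" "contraction_factor < 1"
  "agent_norm m (agent_mix m W (agent_dev m z)) \<le> contraction_factor * agent_norm m (agent_dev m (z :: nat \<Rightarrow> 'a))"
proof -
  obtain \<kappa> where "0 \<le> \<kappa>" "\<kappa> < 1" "\<And>z :: nat \<Rightarrow> 'a. (\<Sum>i<m. z i) = 0 \<Longrightarrow>
       agent_norm m (agent_mix m W z) \<le> \<kappa> * agent_norm m z"
    using mixing_matrix_contraction[OF W] by blast
  then have "\<exists>\<kappa>. 0 \<le> \<kappa> \<and> \<kappa> < 1 \<and> (\<forall>z :: nat \<Rightarrow> 'a. (\<Sum>i<m. z i) = 0 \<longrightarrow>
     agent_norm m (agent_mix m W z) \<le> \<kappa> * agent_norm m z)"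
    by blast
  from someI_ex[OF this, folded contraction_factor_def]
  show "0 \<le> contraction_factor" "contraction_factor < 1"
    "agent_norm m (agent_mix m W (agent_dev m z)) \<le> contraction_factor * agent_norm m (agent_dev m z)"
    using sum_agent_dev[OF m_pos] by auto
qed

lemma agent_norm_dev_X_Suc:
  "agent_norm m (agent_dev m (X \<omega> (Suc t)))
     \<le> contraction_factor * agent_norm m (agent_dev m (X \<omega> t))
       + 2 / (real t + 1) * (sqrt (real m) * diameter \<Omega>)"
proof -
  let ?\<gamma> = "step_size t"
  have "agent_norm m (agent_dev m (X \<omega> (Suc t)))
      = agent_norm m (\<lambda>i. (1 - ?\<gamma>) *\<^sub>R agent_mix m W (agent_dev m (X \<omega> t)) i
          + ?\<gamma> *\<^sub>R agent_dev m (lmo_out \<omega> t) i)"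
    unfolding state_Suc(1)
    by (intro agent_norm_cong) (simp add: agent_dev_add agent_dev_scaleR agent_mix_dev[OF W_stochastic(2,3)])
  also have "\<dots> \<le> (1 - ?\<gamma>) * agent_norm m (agent_mix m W (agent_dev m (X \<omega> t)))
      + ?\<gamma> * agent_norm m (agent_dev m (lmo_out \<omega> t))"
    using agent_norm_triangle[of m "\<lambda>i. (1 - ?\<gamma>) *\<^sub>R agent_mix m W (agent_dev m (X \<omega> t)) i"
        "\<lambda>i. ?\<gamma> *\<^sub>R agent_dev m (lmo_out \<omega> t) i"] step_size_bounds[of t]
    by (simp add: agent_norm_scaleR)
  also have "\<dots> \<le> 1 * (contraction_factor * agent_norm m (agent_dev m (X \<omega> t)))
      + 2 / (real t + 1) * (sqrt (real m) * diameter \<Omega>)"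
  proof (intro add_mono mult_mono)
    show "agent_norm m (agent_dev m (lmo_out \<omega> t)) \<le> sqrt (real m) * diameter \<Omega>"
      unfolding agent_dev_def using lmo_out_in diameter_nonneg m_pos
      by (intro agent_norm_le_sqrt dist_le_diameter agent_avg_in_convex[OF convex_\<Omega>]) auto
  qed (use step_size_bounds[of t] contraction_factor agent_norm_nonneg diameter_nonneg in auto)
  finally show ?thesis
    by simp
qed

lemma X_consensus:
  obtains K where "0 \<le> K" "\<And>\<omega> t i. i < m \<Longrightarrow> norm (X \<omega> t i - xbar \<omega> t) \<le> K / (real t + 1)"
proof -
  have c: "0 \<le> 2 * (sqrt (real m) * diameter \<Omega>)"
    using diameter_nonneg by simp
  obtain K where K: "\<And>e t. (\<forall>t. 0 \<le> e t) \<Longrightarrow> e 0 \<le> agent_norm m (agent_dev m x1) \<Longrightarrow>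
      (\<forall>t. e (Suc t) \<le> contraction_factor * e t + 2 * (sqrt (real m) * diameter \<Omega>) / (real t + 1)) \<Longrightarrow>
      e t \<le> K / (real t + 1)"
    using contracting_recurrence_inverse_rate[OF contraction_factor(1,2) c] by blast
  have bound: "norm (X \<omega> t i - xbar \<omega> t) \<le> K / (real t + 1)" if "i < m" for \<omega> t i
  proof -
    have "norm (X \<omega> t i - xbar \<omega> t) \<le> agent_norm m (agent_dev m (X \<omega> t))"
      using norm_le_agent_norm[OF that, of "agent_dev m (X \<omega> t)"] by (simp add: agent_dev_def xbar_def)
    also have "\<dots> \<le> K / (real t + 1)"
      using agent_norm_dev_X_Suc[of \<omega>] agent_norm_nonneg
      by (intro K) (auto simp: state_0 mult.commute)
    finally show ?thesis .
  qed
  have "0 \<le> K"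
    using order_trans[OF norm_ge_zero bound[of 0 "\<lambda>_. 0" 0]] m_pos by simp
  with bound show ?thesis
    using that by blast
qed

lemma X_movement:
  obtains K where "0 \<le> K" "\<And>\<omega> t i. i < m \<Longrightarrow> norm (X \<omega> (Suc t) i - X \<omega> t i) \<le> K / (real t + 1)"
proof -
  obtain Kx where Kx: "0 \<le> Kx" "\<And>\<omega> t i. i < m \<Longrightarrow> norm (X \<omega> t i - xbar \<omega> t) \<le> Kx / (real t + 1)"
    using X_consensus by blast
  have "norm (X \<omega> (Suc t) i - X \<omega> t i) \<le> (2 * Kx + 2 * diameter \<Omega>) / (real t + 1)"
    if i: "i < m" for \<omega> t i
  proof -
    have "norm (X \<omega> (Suc t) i - xbar \<omega> (Suc t)) \<le> Kx / (real t + 1)"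
      using Kx(2)[OF i, of \<omega> "Suc t"] Kx(1) by (simp add: frac_le order_trans)
    moreover have "norm (xbar \<omega> t - X \<omega> t i) \<le> Kx / (real t + 1)"
      using Kx(2)[OF i] by (simp add: norm_minus_commute)
    moreover have "norm (xbar \<omega> (Suc t) - xbar \<omega> t) \<le> 2 * diameter \<Omega> / (real t + 1)"
    proof -
      have "xbar \<omega> (Suc t) - xbar \<omega> t = step_size t *\<^sub>R (agent_avg m (lmo_out \<omega> t) - xbar \<omega> t)"
        unfolding xbar_Suc by (simp add: algebra_simps)
      moreover have "norm (agent_avg m (lmo_out \<omega> t) - xbar \<omega> t) \<le> diameter \<Omega>"
        using lmo_out_in xbar_in by (intro dist_le_diameter agent_avg_in_convex[OF convex_\<Omega> m_pos]) auto
      then have "step_size t * norm (agent_avg m (lmo_out \<omega> t) - xbar \<omega> t) \<le> 2 / (real t + 1) * diameter \<Omega>"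
        using step_size_bounds[of t] diameter_nonneg by (intro mult_mono) auto
      ultimately show ?thesis
        using step_size_bounds[of t] by simp
    qed
    ultimately show ?thesis
      using norm_diff_triangle3[where a = "X \<omega> (Suc t) i" and b = "xbar \<omega> (Suc t)" and c = "xbar \<omega> t"
          and d = "X \<omega> t i"]
      by (simp add: add_divide_distrib)
  qed
  then show ?thesis
    using Kx(1) diameter_nonneg by (intro that[of "2 * Kx + 2 * diameter \<Omega>"]) auto
qed

lemma gr_lipschitz:
  "i < m \<Longrightarrow> j < n i \<Longrightarrow> x \<in> U \<Longrightarrow> y \<in> U \<Longrightarrow> norm (gr i j x - gr i j y) \<le> \<bar>L\<bar> * norm (x - y)"
  using smooth by (meson abs_ge_self mult_right_mono norm_ge_zero order_trans)

lemma grad_lipschitz: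
  assumes "i < m" "x \<in> U" "y \<in> U"
  shows "norm (grad i x - grad i y) \<le> \<bar>L\<bar> * norm (x - y)"
proof -
  have "grad i x - grad i y = (1 / real (n i)) *\<^sub>R (\<Sum>j<n i. gr i j x - gr i j y)"
    unfolding local_grad_def by (simp add: sum_subtractf scaleR_diff_right)
  also have "norm \<dots> \<le> \<bar>L\<bar> * norm (x - y)"
    using gr_lipschitz assms by (intro norm_sample_avg_le) auto
  finally show ?thesis .
qed

lemma estimator_error_Suc:
  assumes \<omega>: "admissible \<omega>" and i: "i < m" and no_reset: "(Suc t + 1) mod q \<noteq> 0"
  shows "norm (V \<omega> (Suc t) i - grad i (X \<omega> (Suc t) i))
    \<le> norm (V \<omega> t i - grad i (X \<omega> t i)) + 2 * \<bar>L\<bar> * norm (X \<omega> (Suc t) i - X \<omega> t i)"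
proof -
  define x' where "x' = X \<omega> (Suc t) i"
  define x where "x = X \<omega> t i"
  define S where "S = (1 / real (s (Suc t))) *\<^sub>R
        (\<Sum>l<s (Suc t). gr i (\<omega> (Suc t, i, l)) x' - gr i (\<omega> (Suc t, i, l)) x)"
  have "V \<omega> (Suc t) i - grad i x' = (V \<omega> t i - grad i x) + S - (grad i x' - grad i x)"
    using no_reset by (simp add: state_Suc(2) S_def x'_def x_def)
  then have decomp: "norm (V \<omega> (Suc t) i - grad i x') = norm ((V \<omega> t i - grad i x) + S - (grad i x' - grad i x))"
    by (rule arg_cong)
  moreover have "norm S \<le> \<bar>L\<bar> * norm (x' - x)"
    unfolding S_def using \<omega> i X_in_U unfolding admissible_def x'_def x_def
    by (intro norm_sample_avg_le gr_lipschitz) auto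
  moreover have "norm (grad i x' - grad i x) \<le> \<bar>L\<bar> * norm (x' - x)"
    using grad_lipschitz i X_in_U unfolding x'_def x_def by blast
  ultimately show ?thesis
    using norm_triangle_ineq4[of "(V \<omega> t i - grad i x) + S" "grad i x' - grad i x"]
      norm_triangle_ineq[of "V \<omega> t i - grad i x" S]
    unfolding x'_def[symmetric] x_def[symmetric] by linarith
qed

lemma estimator_error:
  obtains K where "0 \<le> K"
    "\<And>\<omega> t i. admissible \<omega> \<Longrightarrow> i < m \<Longrightarrow> norm (V \<omega> t i - grad i (X \<omega> t i)) \<le> K / (real t + 1)"
proof -
  obtain Km where Km: "0 \<le> Km" "\<And>\<omega> t i. i < m \<Longrightarrow> norm (X \<omega> (Suc t) i - X \<omega> t i) \<le> Km / (real t + 1)"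
    using X_movement by blast
  define c where "c = 2 * \<bar>L\<bar> * Km"
  have c: "0 \<le> c"
    unfolding c_def using Km(1) by simp
  have "norm (V \<omega> t i - grad i (X \<omega> t i)) \<le> c * real q * real q / (real t + 1)"
    if "admissible \<omega>" "i < m" for \<omega> t i
  proof (rule reset_recurrence_inverse_rate[OF q_pos c, where e = "\<lambda>t. norm (V \<omega> t i - grad i (X \<omega> t i))"])
    fix t
    assume "(Suc t + 1) mod q \<noteq> 0"
    have "2 * \<bar>L\<bar> * norm (X \<omega> (Suc t) i - X \<omega> t i) \<le> 2 * \<bar>L\<bar> * (Km / (real t + 1))"
      using Km(2)[OF that(2)] by (intro mult_left_mono) auto
    with estimator_error_Suc[OF that \<open>(Suc t + 1) mod q \<noteq> 0\<close>]
    show "norm (V \<omega> (Suc t) i - grad i (X \<omega> (Suc t) i))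
        \<le> norm (V \<omega> t i - grad i (X \<omega> t i)) + c / (real t + 1)"
      unfolding c_def by simp
  qed (simp_all add: state_0 state_Suc(2))
  then show ?thesis
    using c by (intro that[of "c * real q * real q"]) auto
qed

lemma V_increment:
  obtains K where "0 \<le> K"
    "\<And>\<omega> t i. admissible \<omega> \<Longrightarrow> i < m \<Longrightarrow> norm (V \<omega> (Suc t) i - V \<omega> t i) \<le> K / (real t + 1)"
proof -
  obtain Km where Km: "0 \<le> Km" "\<And>\<omega> t i. i < m \<Longrightarrow> norm (X \<omega> (Suc t) i - X \<omega> t i) \<le> Km / (real t + 1)"
    using X_movement by blast
  obtain Kv where Kv: "0 \<le> Kv"
    "\<And>\<omega> t i. admissible \<omega> \<Longrightarrow> i < m \<Longrightarrow> norm (V \<omega> t i - grad i (X \<omega> t i)) \<le> Kv / (real t + 1)"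
    using estimator_error by blast
  have "norm (V \<omega> (Suc t) i - V \<omega> t i) \<le> (2 * Kv + \<bar>L\<bar> * Km) / (real t + 1)"
    if \<omega>: "admissible \<omega>" and i: "i < m" for \<omega> t i
  proof -
    have "norm (V \<omega> (Suc t) i - grad i (X \<omega> (Suc t) i)) \<le> Kv / (real t + 1)"
      using Kv(2)[OF \<omega> i, of "Suc t"] Kv(1) by (simp add: frac_le order_trans)
    moreover have "norm (grad i (X \<omega> (Suc t) i) - grad i (X \<omega> t i)) \<le> \<bar>L\<bar> * (Km / (real t + 1))"
      using grad_lipschitz[OF i X_in_U[OF i] X_in_U[OF i]] Km(2)[OF i]
      by (meson abs_ge_zero mult_left_mono order_trans)
    moreover have "norm (grad i (X \<omega> t i) - V \<omega> t i) \<le> Kv / (real t + 1)"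
      using Kv(2)[OF \<omega> i] by (simp add: norm_minus_commute)
    ultimately show ?thesis
      using norm_diff_triangle3[where a = "V \<omega> (Suc t) i" and b = "grad i (X \<omega> (Suc t) i)"
          and c = "grad i (X \<omega> t i)" and d = "V \<omega> t i"]
      by (simp add: add_divide_distrib)
  qed
  then show ?thesis
    using Km(1) Kv(1) by (intro that[of "2 * Kv + \<bar>L\<bar> * Km"]) auto
qed

lemma agent_avg_D: "agent_avg m (D \<omega> t) = agent_avg m (V \<omega> t)"
proof (induction t)
  case (Suc t)
  then show ?case
    unfolding state_Suc(3) agent_avg_mix[OF W_stochastic(3)]
    by (simp add: agent_avg_add agent_avg_diff)
qed (simp add: state_0)

lemma agent_norm_dev_D_Suc:
  assumes dV: "\<And>i. i < m \<Longrightarrow> norm (V \<omega> (Suc t) i - V \<omega> t i) \<le> \<delta>"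
  shows "agent_norm m (agent_dev m (D \<omega> (Suc t)))
    \<le> contraction_factor * agent_norm m (agent_dev m (D \<omega> t)) + sqrt (real m) * \<delta>"
proof -
  define dV where "dV i = V \<omega> (Suc t) i - V \<omega> t i" for i
  have \<delta>: "0 \<le> \<delta>"
    using order_trans[OF norm_ge_zero dV[of 0]] m_pos by simp
  have "agent_norm m (agent_dev m (D \<omega> (Suc t)))
      = agent_norm m (agent_mix m W (agent_dev m (\<lambda>i. D \<omega> t i + dV i)))"
    unfolding state_Suc(3) dV_def
    by (intro agent_norm_cong) (simp add: agent_mix_dev[OF W_stochastic(2,3)] add_diff_eq)
  also have "\<dots> \<le> contraction_factor * agent_norm m (agent_dev m (\<lambda>i. D \<omega> t i + dV i))"
    by (rule contraction_factor(3))
  also have "\<dots> \<le> contraction_factor * (agent_norm m (agent_dev m (D \<omega> t)) + sqrt (real m) * \<delta>)"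
  proof (intro mult_left_mono contraction_factor(1))
    have "agent_norm m dV \<le> sqrt (real m) * \<delta>"
      unfolding dV_def using dV \<delta> by (rule agent_norm_le_sqrt)
    then show "agent_norm m (agent_dev m (\<lambda>i. D \<omega> t i + dV i))
        \<le> agent_norm m (agent_dev m (D \<omega> t)) + sqrt (real m) * \<delta>"
      unfolding agent_dev_add
      using agent_norm_triangle[of m "agent_dev m (D \<omega> t)" "agent_dev m dV"] agent_norm_dev_le[of m dV]
      by linarith
  qed
  also have "\<dots> \<le> contraction_factor * agent_norm m (agent_dev m (D \<omega> t)) + sqrt (real m) * \<delta>"
    using contraction_factor(1,2) \<delta> mult_left_le_one_le[of "sqrt (real m) * \<delta>" contraction_factor]
    by (simp add: distrib_left)
  finally show ?thesis .
qed

lemma D_consensus: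
  obtains K where "0 \<le> K"
    "\<And>\<omega> t i. admissible \<omega> \<Longrightarrow> i < m \<Longrightarrow> norm (D \<omega> t i - agent_avg m (D \<omega> t)) \<le> K / (real t + 1)"
proof -
  obtain Kdv where Kdv: "0 \<le> Kdv"
    "\<And>\<omega> t i. admissible \<omega> \<Longrightarrow> i < m \<Longrightarrow> norm (V \<omega> (Suc t) i - V \<omega> t i) \<le> Kdv / (real t + 1)"
    using V_increment by blast
  have c: "0 \<le> sqrt (real m) * Kdv"
    using Kdv(1) by simp
  obtain K where K: "\<And>e t. (\<forall>t. 0 \<le> e t) \<Longrightarrow> e 0 \<le> agent_norm m (agent_dev m (\<lambda>i. grad i (x1 i))) \<Longrightarrow>
      (\<forall>t. e (Suc t) \<le> contraction_factor * e t + sqrt (real m) * Kdv / (real t + 1)) \<Longrightarrow>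
      e t \<le> K / (real t + 1)"
    using contracting_recurrence_inverse_rate[OF contraction_factor(1,2) c] by blast
  have bound: "norm (D \<omega> t i - agent_avg m (D \<omega> t)) \<le> K / (real t + 1)"
    if \<omega>: "admissible \<omega>" and i: "i < m" for \<omega> t i
  proof -
    have "norm (D \<omega> t i - agent_avg m (D \<omega> t)) \<le> agent_norm m (agent_dev m (D \<omega> t))"
      using norm_le_agent_norm[OF i, of "agent_dev m (D \<omega> t)"] by (simp add: agent_dev_def)
    also have "\<dots> \<le> K / (real t + 1)"
      using agent_norm_dev_D_Suc[OF Kdv(2)[OF \<omega>]] agent_norm_nonneg
      by (intro K) (auto simp: state_0)
    finally show ?thesis .
  qed
  have "admissible (\<lambda>_. 0)"
    unfolding admissible_def using n_pos by auto
  then have "0 \<le> K"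
    using order_trans[OF norm_ge_zero bound[of "\<lambda>_. 0" 0 0]] m_pos by simp
  with bound show ?thesis
    using that by blast
qed

lemma tracking_error:
  obtains K where "0 \<le> K"
    "\<And>\<omega> t i. admissible \<omega> \<Longrightarrow> i < m \<Longrightarrow> norm (D \<omega> t i - gradF (xbar \<omega> t)) \<le> K / (real t + 1)"
proof -
  obtain Kx where Kx: "0 \<le> Kx" "\<And>\<omega> t i. i < m \<Longrightarrow> norm (X \<omega> t i - xbar \<omega> t) \<le> Kx / (real t + 1)"
    using X_consensus by blast
  obtain Kv where Kv: "0 \<le> Kv"
    "\<And>\<omega> t i. admissible \<omega> \<Longrightarrow> i < m \<Longrightarrow> norm (V \<omega> t i - grad i (X \<omega> t i)) \<le> Kv / (real t + 1)"
    using estimator_error by blast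
  obtain Kd where Kd: "0 \<le> Kd"
    "\<And>\<omega> t i. admissible \<omega> \<Longrightarrow> i < m \<Longrightarrow> norm (D \<omega> t i - agent_avg m (D \<omega> t)) \<le> Kd / (real t + 1)"
    using D_consensus by blast
  have "norm (D \<omega> t i - gradF (xbar \<omega> t)) \<le> (Kd + Kv + \<bar>L\<bar> * Kx) / (real t + 1)"
    if \<omega>: "admissible \<omega>" and i: "i < m" for \<omega> t i
  proof -
    let ?a = "D \<omega> t i - agent_avg m (D \<omega> t)"
    let ?b = "agent_avg m (\<lambda>j. V \<omega> t j - grad j (X \<omega> t j))"
    let ?c = "agent_avg m (\<lambda>j. grad j (X \<omega> t j) - grad j (xbar \<omega> t))"
    have "D \<omega> t i - gradF (xbar \<omega> t) = ?a + ?b + ?c"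
      unfolding agent_avg_diff gradF_def agent_avg_D by simp
    then have "norm (D \<omega> t i - gradF (xbar \<omega> t)) = norm (?a + ?b + ?c)"
      by (rule arg_cong)
    moreover have "norm ?b \<le> Kv / (real t + 1)"
      using Kv(2)[OF \<omega>] by (intro norm_agent_avg_le[OF m_pos]) auto
    moreover have "norm ?c \<le> \<bar>L\<bar> * Kx / (real t + 1)"
    proof (rule norm_agent_avg_le[OF m_pos])
      fix j assume j: "j < m"
      have "norm (grad j (X \<omega> t j) - grad j (xbar \<omega> t)) \<le> \<bar>L\<bar> * norm (X \<omega> t j - xbar \<omega> t)"
        using grad_lipschitz[OF j X_in_U[OF j]] xbar_in \<Omega>_subset_U by blast
      also have "\<dots> \<le> \<bar>L\<bar> * (Kx / (real t + 1))"
        using Kx(2)[OF j] by (intro mult_left_mono) auto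
      finally show "norm (grad j (X \<omega> t j) - grad j (xbar \<omega> t)) \<le> \<bar>L\<bar> * Kx / (real t + 1)"
        by simp
    qed
    ultimately show ?thesis
      using Kd(2)[OF \<omega> i, of t] norm_triangle_ineq[of "?a + ?b" ?c] norm_triangle_ineq[of ?a ?b]
      unfolding add_divide_distrib by linarith
  qed
  then show ?thesis
    using Kd(1) Kv(1) Kx(1) by (intro that[of "Kd + Kv + \<bar>L\<bar> * Kx"]) auto
qed

lemma F_has_derivative:
  assumes "x \<in> U"
  shows "(F has_derivative (\<lambda>h. gradF x \<bullet> h)) (at x)"
proof -
  have "(local_obj fij n i has_derivative (\<lambda>h. grad i x \<bullet> h)) (at x)" if "i < m" for i
  proof -
    have "((\<lambda>x. (1 / real (n i)) * (\<Sum>j<n i. fij i j x)) has_derivative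
        (\<lambda>h. (1 / real (n i)) * (\<Sum>j<n i. gr i j x \<bullet> h))) (at x)"
      using diff that assms by (intro has_derivative_mult_right has_derivative_sum) auto
    then show ?thesis
      by (simp add: local_obj_def[abs_def] local_grad_def inner_sum_left)
  qed
  then have "((\<lambda>x. (1 / real m) * (\<Sum>i<m. local_obj fij n i x)) has_derivative
      (\<lambda>h. (1 / real m) * (\<Sum>i<m. grad i x \<bullet> h))) (at x)"
    by (intro has_derivative_mult_right has_derivative_sum) auto
  then show ?thesis
    by (simp add: global_obj_def[abs_def] gradF_def agent_avg_def inner_sum_left)
qed

lemma gradF_lipschitz:
  assumes "x \<in> U" "y \<in> U"
  shows "norm (gradF x - gradF y) \<le> \<bar>L\<bar> * norm (x - y)"
proof -
  have "gradF x - gradF y = agent_avg m (\<lambda>i. grad i x - grad i y)"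
    unfolding gradF_def agent_avg_diff ..
  also have "norm \<dots> \<le> \<bar>L\<bar> * norm (x - y)"
    using grad_lipschitz assms by (intro norm_agent_avg_le[OF m_pos])
  finally show ?thesis .
qed

lemma F_linearization:
  assumes "x \<in> \<Omega>" "y \<in> \<Omega>"
  shows "\<bar>F y - F x - gradF x \<bullet> (y - x)\<bar> \<le> \<bar>L\<bar> * (norm (y - x))\<^sup>2"
proof (rule lipschitz_gradient_linearization[where f = F and g = gradF, OF convex_\<Omega> assms abs_ge_zero])
  fix z assume "z \<in> \<Omega>"
  with \<Omega>_subset_U have "z \<in> U"
    by blast
  then show "(F has_derivative (\<lambda>h. gradF z \<bullet> h)) (at z within \<Omega>)"
    by (rule has_derivative_at_withinI[OF F_has_derivative])
next
  fix z w assume "z \<in> \<Omega>" "w \<in> \<Omega>"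
  with \<Omega>_subset_U show "norm (gradF z - gradF w) \<le> \<bar>L\<bar> * norm (z - w)"
    by (intro gradF_lipschitz) auto
qed

lemma convex_on_F: "convex_on \<Omega> F"
proof (rule convex_onI[OF _ convex_\<Omega>])
  fix \<tau> :: real and x y assume "0 < \<tau>" "\<tau> < 1" "x \<in> \<Omega>" "y \<in> \<Omega>"
  then have "(\<Sum>i<m. local_obj fij n i ((1 - \<tau>) *\<^sub>R x + \<tau> *\<^sub>R y))
      \<le> (\<Sum>i<m. (1 - \<tau>) * local_obj fij n i x + \<tau> * local_obj fij n i y)"
    using cvx by (intro sum_mono convex_onD) auto
  also have "\<dots> = (1 - \<tau>) * (\<Sum>i<m. local_obj fij n i x) + \<tau> * (\<Sum>i<m. local_obj fij n i y)"
    by (simp add: sum.distrib sum_distrib_left)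
  finally have "(\<Sum>i<m. local_obj fij n i ((1 - \<tau>) *\<^sub>R x + \<tau> *\<^sub>R y)) / real m
      \<le> ((1 - \<tau>) * (\<Sum>i<m. local_obj fij n i x) + \<tau> * (\<Sum>i<m. local_obj fij n i y)) / real m"
    by (rule divide_right_mono) simp
  then show "F ((1 - \<tau>) *\<^sub>R x + \<tau> *\<^sub>R y) \<le> (1 - \<tau>) * F x + \<tau> * F y"
    unfolding global_obj_def by (simp add: add_divide_distrib)
qed

lemma F_above_tangent:
  assumes "x \<in> \<Omega>"
  shows "gradF x \<bullet> (xstar - x) \<le> F xstar - F x"
proof (rule convex_on_above_linearization[where g = "gradF x", OF convex_on_F convex_\<Omega> assms opt(1) abs_ge_zero])
  fix z assume "z \<in> \<Omega>"
  then show "F x + gradF x \<bullet> (z - x) - \<bar>L\<bar> * (norm (z - x))\<^sup>2 \<le> F z"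
    using F_linearization[OF assms \<open>z \<in> \<Omega>\<close>] by (simp add: abs_le_iff)
qed

text \<open>The error of \<open>d\<^sub>i\<close> enters only through its pairings with \<open>u - x\<close> and \<open>x\<^sup>* - x\<close>, both
  bounded by the diameter.\<close>
lemma lmo_out_gap:
  assumes "norm (D \<omega> t i - gradF (xbar \<omega> t)) \<le> \<epsilon>"
  shows "(lmo_out \<omega> t i - xbar \<omega> t) \<bullet> gradF (xbar \<omega> t)
    \<le> F xstar - F (xbar \<omega> t) + 2 * diameter \<Omega> * \<epsilon>"
proof -
  define x where "x = xbar \<omega> t"
  define g where "g = gradF x"
  define d where "d = D \<omega> t i"
  define u where "u = lmo_out \<omega> t i"
  have x: "x \<in> \<Omega>" and u: "u \<in> \<Omega>"
    unfolding x_def u_def by (rule xbar_in lmo_out_in)+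
  have eps: "norm (d - g) \<le> \<epsilon>"
    using assms unfolding d_def g_def x_def .
  then have "0 \<le> \<epsilon>"
    using norm_ge_zero order_trans by blast
  have "u \<bullet> d \<le> xstar \<bullet> d"
    unfolding u_def lmo_out_def d_def using lmo opt(1) by blast
  moreover have "(g - d) \<bullet> (u - x) \<le> \<epsilon> * diameter \<Omega>"
  proof -
    have "norm (g - d) * norm (u - x) \<le> \<epsilon> * diameter \<Omega>"
      using eps \<open>0 \<le> \<epsilon>\<close> dist_le_diameter[OF u x] by (intro mult_mono) (auto simp: norm_minus_commute)
    then show ?thesis
      using norm_cauchy_schwarz[of "g - d" "u - x"] by linarith
  qed
  moreover have "(d - g) \<bullet> (xstar - x) \<le> \<epsilon> * diameter \<Omega>"
  proof -
    have "norm (d - g) * norm (xstar - x) \<le> \<epsilon> * diameter \<Omega>"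
      using eps \<open>0 \<le> \<epsilon>\<close> dist_le_diameter[OF opt(1) x] by (intro mult_mono) auto
    then show ?thesis
      using norm_cauchy_schwarz[of "d - g" "xstar - x"] by linarith
  qed
  moreover have "g \<bullet> (xstar - x) \<le> F xstar - F x"
    unfolding g_def by (rule F_above_tangent[OF x])
  ultimately show ?thesis
    unfolding x_def[symmetric] g_def[symmetric] u_def[symmetric]
    by (simp add: inner_diff_left inner_diff_right inner_commute algebra_simps)
qed

lemma gap_Suc:
  assumes \<epsilon>: "\<And>i. i < m \<Longrightarrow> norm (D \<omega> t i - gradF (xbar \<omega> t)) \<le> \<epsilon>"
  shows "F (xbar \<omega> (Suc t)) - F xstar \<le> (1 - step_size t) * (F (xbar \<omega> t) - F xstar)
    + 2 * diameter \<Omega> * step_size t * \<epsilon> + \<bar>L\<bar> * (diameter \<Omega>)\<^sup>2 * (step_size t)\<^sup>2"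
proof -
  define \<gamma> where "\<gamma> = step_size t"
  define x where "x = xbar \<omega> t"
  define ub where "ub = agent_avg m (lmo_out \<omega> t)"
  have \<gamma>: "0 \<le> \<gamma>" "\<gamma> \<le> 1"
    unfolding \<gamma>_def using step_size_bounds by auto
  have x: "x \<in> \<Omega>" and ub: "ub \<in> \<Omega>"
    unfolding x_def ub_def using xbar_in lmo_out_in by (auto intro: agent_avg_in_convex[OF convex_\<Omega> m_pos])
  have step: "xbar \<omega> (Suc t) - x = \<gamma> *\<^sub>R (ub - x)"
    unfolding xbar_Suc x_def \<gamma>_def ub_def by (simp add: algebra_simps)
  have "(norm (xbar \<omega> (Suc t) - x))\<^sup>2 \<le> (\<gamma> * diameter \<Omega>)\<^sup>2"
    unfolding step using \<gamma> dist_le_diameter[OF ub x] by (intro power_mono) (auto intro: mult_left_mono)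
  then have quadratic: "\<bar>L\<bar> * (norm (xbar \<omega> (Suc t) - x))\<^sup>2 \<le> \<bar>L\<bar> * (diameter \<Omega>)\<^sup>2 * \<gamma>\<^sup>2"
    by (simp add: mult_left_mono power_mult_distrib mult.commute mult.left_commute)
  have "(ub - x) \<bullet> gradF x = agent_avg m (\<lambda>i. lmo_out \<omega> t i - x) \<bullet> gradF x"
    unfolding ub_def agent_avg_diff agent_avg_const[OF m_pos] ..
  also have "\<dots> \<le> F xstar - F x + 2 * diameter \<Omega> * \<epsilon>"
    using lmo_out_gap[OF \<epsilon>] unfolding x_def by (intro inner_agent_avg_le[OF m_pos])
  finally have linear: "gradF x \<bullet> (xbar \<omega> (Suc t) - x) \<le> \<gamma> * (F xstar - F x + 2 * diameter \<Omega> * \<epsilon>)"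
    unfolding step using \<gamma> by (simp add: inner_commute mult_left_mono)
  show ?thesis
    using F_linearization[OF x xbar_in[of \<omega> "Suc t"]] linear quadratic
    unfolding \<gamma>_def[symmetric] x_def[symmetric] by (simp add: abs_le_iff algebra_simps)
qed

lemma gap_rate:
  obtains K where
    "\<And>\<omega> t. admissible \<omega> \<Longrightarrow> \<bar>F (xbar \<omega> t) - F xstar\<bar> \<le> K / (real t + 1)"
proof -
  obtain Ke where Ke: "0 \<le> Ke"
    "\<And>\<omega> t i. admissible \<omega> \<Longrightarrow> i < m \<Longrightarrow> norm (D \<omega> t i - gradF (xbar \<omega> t)) \<le> Ke / (real t + 1)"
    using tracking_error by blast
  define c where "c = 4 * diameter \<Omega> * Ke + 4 * \<bar>L\<bar> * (diameter \<Omega>)\<^sup>2"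
  have c: "0 \<le> c"
    unfolding c_def using Ke(1) diameter_nonneg by simp
  have "F (xbar \<omega> t) - F xstar \<le> max (F (agent_avg m x1) - F xstar) (2 * c) / (real t + 1)"
    if \<omega>: "admissible \<omega>" for \<omega> t
  proof (rule frank_wolfe_recurrence_inverse_rate[OF c])
    fix t
    have "2 * diameter \<Omega> * step_size t * (Ke / (real t + 1)) + \<bar>L\<bar> * (diameter \<Omega>)\<^sup>2 * (step_size t)\<^sup>2
        \<le> 2 * diameter \<Omega> * (2 / (real t + 1)) * (Ke / (real t + 1))
          + \<bar>L\<bar> * (diameter \<Omega>)\<^sup>2 * (2 / (real t + 1))\<^sup>2"
      using step_size_bounds[of t] diameter_nonneg Ke(1)
      by (intro add_mono mult_right_mono mult_left_mono power_mono) auto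
    also have "\<dots> = c / (real t + 1)\<^sup>2"
      unfolding c_def by (simp add: power2_eq_square field_simps add_divide_distrib)
    finally have "2 * diameter \<Omega> * step_size t * (Ke / (real t + 1))
        + \<bar>L\<bar> * (diameter \<Omega>)\<^sup>2 * (step_size t)\<^sup>2 \<le> c / (real t + 1)\<^sup>2" .
    moreover have "F (xbar \<omega> (Suc t)) - F xstar \<le> (1 - step_size t) * (F (xbar \<omega> t) - F xstar)
        + 2 * diameter \<Omega> * step_size t * (Ke / (real t + 1)) + \<bar>L\<bar> * (diameter \<Omega>)\<^sup>2 * (step_size t)\<^sup>2"
      using Ke(2)[OF \<omega>] by (rule gap_Suc)
    ultimately show "F (xbar \<omega> (Suc t)) - F xstar
        \<le> (1 - 2 / (real (Suc t) + 1)) * (F (xbar \<omega> t) - F xstar) + c / (real t + 1)\<^sup>2"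
      unfolding step_size_def by linarith
  qed (simp add: xbar_def state_0)
  moreover have "0 \<le> F (xbar \<omega> t) - F xstar" for \<omega> t
    using opt(2) xbar_in by simp
  ultimately show ?thesis
    by (intro that[of "max (F (agent_avg m x1) - F xstar) (2 * c)"]) auto
qed

lemma X_agree:
  assumes "\<And>t i l. t < k \<Longrightarrow> i < m \<Longrightarrow> l < s t \<Longrightarrow> \<omega> (t, i, l) = \<omega>' (t, i, l)"
  shows "t < k \<Longrightarrow> \<forall>i<m. X \<omega> t i = X \<omega>' t i \<and> V \<omega> t i = V \<omega>' t i \<and> D \<omega> t i = D \<omega>' t i"
proof (induction t)
  case (Suc t)
  then have IH: "\<forall>i<m. X \<omega> t i = X \<omega>' t i \<and> V \<omega> t i = V \<omega>' t i \<and> D \<omega> t i = D \<omega>' t i"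
    by simp
  have X: "X \<omega> (Suc t) i = X \<omega>' (Suc t) i" if "i < m" for i
    unfolding state_Suc(1) lmo_out_def agent_mix_def using IH that by simp
  moreover have V: "V \<omega> (Suc t) i = V \<omega>' (Suc t) i" if "i < m" for i
    unfolding state_Suc(2) using X IH that assms Suc.prems by (auto intro!: sum.cong)
  moreover have "D \<omega> (Suc t) i = D \<omega>' (Suc t) i" if "i < m" for i
    unfolding state_Suc(3) agent_mix_def using IH V by (auto intro!: sum.cong)
  ultimately show ?case
    by blast
qed (simp add: state_0)

text \<open>The \<open>k\<close>-th averaged iterate only reads samples drawn before iteration \<open>k\<close>, all of which lie
  in range on the support of \<open>sample_pmf m n s k\<close>; replacing the unread entries makes the sample
  admissible.\<close>
lemma sample_path_gap:
  assumes k: "k \<ge> 1" and \<omega>: "\<omega> \<in> set_pmf (sample_pmf m n s k)"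
    and K: "\<And>\<omega> t. admissible \<omega> \<Longrightarrow> \<bar>F (xbar \<omega> t) - F xstar\<bar> \<le> K / (real t + 1)"
  shows "\<bar>F (dstofw_xbar m W n gr lmo (\<lambda>k. 2 / (real k + 1)) q s \<omega> x1 k) - F xstar\<bar> \<le> K / real k"
proof -
  define \<omega>' where "\<omega>' p = (if \<omega> p < n (fst (snd p)) then \<omega> p else 0)" for p
  have "admissible \<omega>'"
    unfolding admissible_def \<omega>'_def using n_pos by auto
  moreover have "\<omega> (t, i, l) = \<omega>' (t, i, l)" if "t < k" "i < m" "l < s t" for t i l
    unfolding \<omega>'_def using sample_pmf_support[OF \<omega> that] n_pos that by auto
  then have "xbar \<omega> (k - 1) = xbar \<omega>' (k - 1)"
    unfolding xbar_def agent_avg_def using X_agree[of k \<omega> \<omega>' "k - 1"] k by simp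
  moreover have "dstofw_xbar m W n gr lmo (\<lambda>k. 2 / (real k + 1)) q s \<omega> x1 k = xbar \<omega> (k - 1)"
    unfolding dstofw_xbar_def dstofw_x_def xbar_def agent_avg_def X_def ..
  ultimately show ?thesis
    using K[of \<omega>' "k - 1"] k by (simp add: of_nat_diff)
qed
end

theorem theorem2:
  fixes \<Omega> U :: "'a::euclidean_space set"
    and m :: nat and n :: "nat \<Rightarrow> nat"
    and fij :: "nat \<Rightarrow> nat \<Rightarrow> 'a \<Rightarrow> real" and gr :: "nat \<Rightarrow> nat \<Rightarrow> 'a \<Rightarrow> 'a"
    and L G C :: real
    and E :: "nat \<Rightarrow> nat \<Rightarrow> bool" and W :: "nat \<Rightarrow> nat \<Rightarrow> real"
    and q :: nat and s :: "nat \<Rightarrow> nat"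
    and lmo :: "nat \<Rightarrow> nat \<Rightarrow> 'a \<Rightarrow> 'a" and x1 :: "nat \<Rightarrow> 'a" and xstar :: 'a
  assumes Omega: "\<Omega> \<noteq> {}" "convex \<Omega>" "compact \<Omega>"
    and m_pos: "m \<ge> 1" and n_pos: "\<forall>i<m. n i \<ge> 1"
    and nbhd: "open U" "\<Omega> \<subseteq> U"
    and diff: "\<forall>i<m. \<forall>j<n i. \<forall>x\<in>U. (fij i j has_derivative (\<lambda>h. gr i j x \<bullet> h)) (at x)"
    and smooth: "\<forall>i<m. \<forall>j<n i. \<forall>x\<in>U. \<forall>y\<in>U. norm (gr i j x - gr i j y) \<le> L * norm (x - y)"
    and lip: "\<forall>i<m. G-lipschitz_on \<Omega> (local_obj fij n i)"
    and bnd: "\<forall>i<m. \<forall>x\<in>\<Omega>. norm (local_grad gr n i x) \<le> C"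
    and cvx: "\<forall>i<m. convex_on \<Omega> (local_obj fij n i)"
    and graph: "connected_graph m E"
    and W: "mixing_matrix m E W"
    and q_pos: "q \<ge> 1"
    and s_pos: "\<forall>k\<ge>1. s k \<ge> 1"
    and rule: "sampling_rule1 q (\<lambda>k. 2 / (real k + 1)) s"
    and lmo: "\<forall>k i d. lmo k i d \<in> \<Omega> \<and> (\<forall>u\<in>\<Omega>. lmo k i d \<bullet> d \<le> u \<bullet> d)"
    and init: "\<forall>i<m. x1 i \<in> \<Omega>"
    and opt: "xstar \<in> \<Omega>" "\<forall>x\<in>\<Omega>. global_obj m fij n xstar \<le> global_obj m fij n x"
  shows "(\<lambda>k. measure_pmf.expectation (sample_pmf m n s k)
              (\<lambda>\<omega>. global_obj m fij n
                     (dstofw_xbar m W n gr lmo (\<lambda>k. 2 / (real k + 1)) q s \<omega> x1 k))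
            - global_obj m fij n xstar)
         \<in> O(\<lambda>k. 1 / real k)"
proof -
  interpret dstofw_setting \<Omega> U m n fij gr L E W q s lmo x1 xstar
    using Omega m_pos n_pos nbhd diff smooth cvx W q_pos lmo init opt by unfold_locales auto
  obtain K where K: "\<And>\<omega> t. admissible \<omega> \<Longrightarrow> \<bar>F (xbar \<omega> t) - F xstar\<bar> \<le> K / (real t + 1)"
    using gap_rate by blast
  have "\<bar>measure_pmf.expectation (sample_pmf m n s k)
      (\<lambda>\<omega>. F (dstofw_xbar m W n gr lmo (\<lambda>k. 2 / (real k + 1)) q s \<omega> x1 k)) - F xstar\<bar>
      \<le> K / real k" if "k \<ge> 1" for k
    using sample_path_gap[OF that _ K] by (intro abs_expectation_diff_le[OF finite_set_sample_pmf[OF n_pos]])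
  then show ?thesis
    by (intro bigoI[of _ K]) (auto simp: eventually_at_top_linorder)
qed

end
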